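(* Assume (C1) and (C2). Then problem (P) has a solution $\bar u\in\mathcal{N}$ (a critical point of $I$ on $\mathcal{D}$) such that $$I(\bar u)=\inf_{u\in\mathcal{N}}I(u)=:c_*>0.$$ In addition, $m_*\ge 2c_*$, where $m_*:=\inf_{u\in\mathcal{M}}I(u)$.
   Context: Fix real numbers $p,q,r$ with $1<p<q$, $\frac{p}{2}$ a positive integer, and $r\ge 1$, and functions $a,b,c:\mathbb{Z}\to(0,+\infty)$. Conditions: - (C1) There is $b_0>0$ with $b(n)\ge b_0$ for all $n\in\mathbb{Z}$ and $\lim_{|n|\to\infty}b(n)=+\infty$. - (C2) There is $c_0>0$ with $c(n)\le c_0$ for all $n\in\mathbb{Z}$ and $\sum_{n\in\mathbb{Z}}c(n)<+\infty$. Notation for a real sequence $u=(u(n))_{n\in\mathbb{Z}}$: $\Delta u(n)=u(n+1)-u(n)$, $u^+(n)=\max\{u(n),0\}$, $u^-(n)=\min\{u(n),0\}$, and $\varphi_p(s)=|s|^{p-2}s$. Spaces: - $E$ is the set of real sequences $u$ with $\|u\|:=\big(\sum_{n\in\mathbb{Z}}[a(n)|\Delta u(n)|^p+b(n)|u(n)|^p]\big)^{1/p}<\infty$. - $\mathcal{D}=\{u\in E:\sum_{n\in\mathbb{Z}}c(n)|u(n)|^q\ln|u(n)|^r<+\infty\}$, where terms with $u(n)=0$ are read as $0$. It carries the norm $\|\cdot\|$. For $u,v\in\mathcal{D}$: - $I(u)=\frac1p\|u\|^p+\frac{r}{q^2}\sum_{n}c(n)|u(n)|^q-\frac1q\sum_{n}c(n)|u(n)|^q\ln|u(n)|^r$.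 - $\langle I'(u),v\rangle=\sum_n\big[a(n)|\Delta u(n)|^{p-2}\Delta u(n)\Delta v(n)+b(n)|u(n)|^{p-2}u(n)v(n)\big]-\sum_n c(n)|u(n)|^{q-2}u(n)v(n)\ln|u(n)|^r$. Sets: - $\mathcal{N}=\{u\in\mathcal{D}:u\neq0,\ \langle I'(u),u\rangle=0\}$. - $\mathcal{M}=\{u\in\mathcal{D}:u^+\ne0,\ u^-\neq0,\ \langle I'(u),u^+\rangle=0,\ \langle I'(u),u^-\rangle=0\}$. Problem (P) is $$-\Delta\big(a(n-1)\varphi_p(\Delta u(n-1))\big)+b(n)\varphi_p(u(n))=c(n)|u(n)|^{q-2}u(n)\ln|u(n)|^r,\quad n\in\mathbb{Z},$$ together with $\lim_{|n|\to\infty}u(n)=0$. A solution of (P) means a critical point of $I$ in $\mathcal{D}$, i.e. $u\in\mathcal{D}$ with $\langle I'(u),v\rangle=0$ for all $v\in\mathcal{D}$. *)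

theory Defs
  imports "HOL-Analysis.Analysis"
begin

definition fdiff :: "(int \<Rightarrow> real) \<Rightarrow> int \<Rightarrow> real" where
  "fdiff u n = u (n + 1) - u n"

definition pos_part :: "(int \<Rightarrow> real) \<Rightarrow> int \<Rightarrow> real" where
  "pos_part u n = max (u n) 0"

definition neg_part :: "(int \<Rightarrow> real) \<Rightarrow> int \<Rightarrow> real" where
  "neg_part u n = min (u n) 0"

definition norm_term :: "real \<Rightarrow> (int \<Rightarrow> real) \<Rightarrow> (int \<Rightarrow> real) \<Rightarrow> (int \<Rightarrow> real) \<Rightarrow> int \<Rightarrow> real" where
  "norm_term p a b u n = a n * \<bar>fdiff u n\<bar> powr p + b n * \<bar>u n\<bar> powr p"

definition spaceE :: "real \<Rightarrow> (int \<Rightarrow> real) \<Rightarrow> (int \<Rightarrow> real) \<Rightarrow> (int \<Rightarrow> real) set" where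
  "spaceE p a b = {u. norm_term p a b u summable_on UNIV}"

definition normp :: "real \<Rightarrow> (int \<Rightarrow> real) \<Rightarrow> (int \<Rightarrow> real) \<Rightarrow> (int \<Rightarrow> real) \<Rightarrow> real" where
  "normp p a b u = (\<Sum>\<^sub>\<infinity>n. norm_term p a b u n)"

definition log_term :: "real \<Rightarrow> real \<Rightarrow> (int \<Rightarrow> real) \<Rightarrow> (int \<Rightarrow> real) \<Rightarrow> int \<Rightarrow> real" where
  "log_term q r c u n = (if u n = 0 then 0 else c n * \<bar>u n\<bar> powr q * ln (\<bar>u n\<bar> powr r))"

definition spaceD :: "real \<Rightarrow> real \<Rightarrow> real \<Rightarrow> (int \<Rightarrow> real) \<Rightarrow> (int \<Rightarrow> real) \<Rightarrow> (int \<Rightarrow> real) \<Rightarrow> (int \<Rightarrow> real) set" where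
  "spaceD p q r a b c = {u \<in> spaceE p a b. log_term q r c u summable_on UNIV}"

definition energyI :: "real \<Rightarrow> real \<Rightarrow> real \<Rightarrow> (int \<Rightarrow> real) \<Rightarrow> (int \<Rightarrow> real) \<Rightarrow> (int \<Rightarrow> real) \<Rightarrow> (int \<Rightarrow> real) \<Rightarrow> real" where
  "energyI p q r a b c u =
     normp p a b u / p
     + r / q\<^sup>2 * (\<Sum>\<^sub>\<infinity>n. c n * \<bar>u n\<bar> powr q)
     - (\<Sum>\<^sub>\<infinity>n. log_term q r c u n) / q"

definition phi :: "real \<Rightarrow> real \<Rightarrow> real" where
  "phi s x = \<bar>x\<bar> powr (s - 2) * x"

definition dI :: "real \<Rightarrow> real \<Rightarrow> real \<Rightarrow> (int \<Rightarrow> real) \<Rightarrow> (int \<Rightarrow> real) \<Rightarrow> (int \<Rightarrow> real) \<Rightarrow> (int \<Rightarrow> real) \<Rightarrow> (int \<Rightarrow> real) \<Rightarrow> real" where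
  "dI p q r a b c u v =
     (\<Sum>\<^sub>\<infinity>n. a n * phi p (fdiff u n) * fdiff v n + b n * phi p (u n) * v n)
     - (\<Sum>\<^sub>\<infinity>n. (if u n = 0 then 0 else c n * phi q (u n) * v n * ln (\<bar>u n\<bar> powr r)))"

definition nehari :: "real \<Rightarrow> real \<Rightarrow> real \<Rightarrow> (int \<Rightarrow> real) \<Rightarrow> (int \<Rightarrow> real) \<Rightarrow> (int \<Rightarrow> real) \<Rightarrow> (int \<Rightarrow> real) set" where
  "nehari p q r a b c = {u \<in> spaceD p q r a b c. u \<noteq> (\<lambda>n. 0) \<and> dI p q r a b c u u = 0}"

definition signchanging_nehari :: "real \<Rightarrow> real \<Rightarrow> real \<Rightarrow> (int \<Rightarrow> real) \<Rightarrow> (int \<Rightarrow> real) \<Rightarrow> (int \<Rightarrow> real) \<Rightarrow> (int \<Rightarrow> real) set" where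
  "signchanging_nehari p q r a b c = {u \<in> spaceD p q r a b c.
      pos_part u \<noteq> (\<lambda>n. 0) \<and> neg_part u \<noteq> (\<lambda>n. 0) \<and>
      dI p q r a b c u (pos_part u) = 0 \<and> dI p q r a b c u (neg_part u) = 0}"

end

theory Submission
  imports Defs
begin

text \<open>Because \<open>p\<close> is even and \<open>b \<ge> b0 > 0\<close>, every \<open>u \<in> E\<close> is bounded by a function of its norm;
  with \<open>c\<close> summable, the two weighted sums \<open>\<Sum> c \<bar>u\<bar>\<^sup>q\<close> and \<open>\<Sum> c \<bar>u\<bar>\<^sup>q ln \<bar>u\<bar>\<^sup>r\<close> are therefore finite
  on \<open>E\<close> (so that \<open>D = E\<close>), differentiable along lines, and continuous under bounded pointwise
  convergence.

  On the Nehari manifold the energy equals \<open>(1/p - 1/q) nrm u + r/q\<^sup>2 \<Sum> c \<bar>u\<bar>\<^sup>q\<close>, which is at least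
  \<open>(1/p - 1/q) b0\<close> because some entry of \<open>u\<close> must exceed \<open>1\<close> in modulus. A minimizing sequence is
  bounded, so a subsequence converges pointwise; at the limit \<open>l\<close> the logarithmic sum is the limit of
  the norms while the norm can only drop (Fatou), so some \<open>t * l\<close> with \<open>t \<le> 1\<close> lies on the manifold
  and attains the infimum.

  Each ray meets the manifold exactly where the energy along the ray is maximal. Hence, if the
  minimizer had a descent direction, a small step in that direction followed by a rescaling back
  onto the manifold would go below the infimum; so the minimizer is a critical point. Finally, for a
  sign-changing \<open>u\<close> in \<open>M\<close>, both sign parts rescale into the manifold at energy at most their share
  of \<open>I u\<close>, which gives \<open>I u \<ge> 2 c\<^sub>*\<close>.\<close>

section \<open>Unordered sums and differentiation under the sum\<close>

lemma summable_on_real_comparison: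
  fixes f :: "'a \<Rightarrow> real"
  assumes "g summable_on A" "\<And>x. x \<in> A \<Longrightarrow> \<bar>f x\<bar> \<le> g x"
  shows "f summable_on A"
proof -
  have "(\<lambda>x. norm (f x)) summable_on A"
    by (rule summable_on_comparison_test[OF assms(1)]) (use assms(2) in auto)
  then show ?thesis using summable_on_iff_abs_summable_on_real by blast
qed

lemma abs_infsum_le:
  fixes f :: "'a \<Rightarrow> real"
  assumes "g summable_on A" "\<And>x. x \<in> A \<Longrightarrow> \<bar>f x\<bar> \<le> g x"
  shows "\<bar>infsum f A\<bar> \<le> infsum g A"
proof -
  have "f summable_on A" using summable_on_real_comparison assms by blast
  then show ?thesis
    using norm_infsum_le[OF has_sum_infsum[OF \<open>f summable_on A\<close>] has_sum_infsum[OF assms(1)]] assms(2)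
    by auto
qed

lemma summable_on_diff:
  fixes f g :: "'a \<Rightarrow> real"
  assumes "f summable_on A" "g summable_on A"
  shows "(\<lambda>x. f x - g x) summable_on A"
  using summable_on_add[OF assms(1) summable_on_uminus[THEN iffD2, OF assms(2)]] by simp

lemma infsum_diff:
  fixes f g :: "'a \<Rightarrow> real"
  assumes "f summable_on A" "g summable_on A"
  shows "infsum (\<lambda>x. f x - g x) A = infsum f A - infsum g A"
  using infsum_add[OF assms(1) summable_on_uminus[THEN iffD2, OF assms(2)]]
  by (simp add: infsum_uminus)

lemma sum_le_infsum_nonneg:
  fixes f :: "'a \<Rightarrow> real"
  assumes "f summable_on UNIV" "\<And>x. 0 \<le> f x" "finite F"
  shows "sum f F \<le> infsum f UNIV"
proof -
  have "infsum f F \<le> infsum f UNIV"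
    by (rule infsum_mono_neutral) (use assms in auto)
  then show ?thesis using assms by simp
qed

lemma infsum_uniform_tail:
  fixes g :: "'a \<Rightarrow> real"
  assumes g: "g summable_on UNIV" and e: "0 < e"
  obtains S where "finite S" "\<And>h. (\<And>n. \<bar>h n\<bar> \<le> g n) \<Longrightarrow> \<bar>infsum h UNIV - sum h S\<bar> \<le> e"
proof -
  obtain S where S: "finite S" "dist (sum g S) (infsum g UNIV) \<le> e"
    using infsum_finite_approximation[OF g e] by auto
  have split: "infsum h UNIV = sum h S + infsum h (- S)" if "h summable_on UNIV" for h :: "'a \<Rightarrow> real"
  proof -
    have "infsum h (S \<union> - S) = infsum h S + infsum h (- S)"
      by (rule infsum_Un_disjoint) (use that S(1) summable_on_subset in auto)
    then show ?thesis using S(1) by simp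
  qed
  have "\<bar>infsum h UNIV - sum h S\<bar> \<le> e" if "\<And>n. \<bar>h n\<bar> \<le> g n" for h
  proof -
    have "\<bar>infsum h (-S)\<bar> \<le> infsum g (-S)"
      by (rule abs_infsum_le) (use g summable_on_subset that in auto)
    also have "\<dots> \<le> e" using split[OF g] S(2) by (simp add: dist_real_def)
    finally show ?thesis using split[OF summable_on_real_comparison[OF g]] that by simp
  qed
  then show ?thesis using that S(1) by blast
qed

lemma infsum_dominated_convergence:
  fixes f :: "'b \<Rightarrow> 'a \<Rightarrow> real"
  assumes g: "g summable_on UNIV"
    and dom: "eventually (\<lambda>s. \<forall>n. \<bar>f s n\<bar> \<le> g n) F"
    and lim: "\<And>n. ((\<lambda>s. f s n) \<longlongrightarrow> L n) F"
    and F: "F \<noteq> bot"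
  shows "L summable_on UNIV" "((\<lambda>s. infsum (f s) UNIV) \<longlongrightarrow> infsum L UNIV) F"
proof -
  have Lg: "\<bar>L n\<bar> \<le> g n" for n
  proof -
    have "eventually (\<lambda>s. \<bar>f s n\<bar> \<le> g n) F" using dom by (rule eventually_mono) auto
    then show ?thesis using tendsto_le[OF F tendsto_const tendsto_rabs[OF lim[of n]]] by blast
  qed
  show "L summable_on UNIV" by (rule summable_on_real_comparison[OF g]) (use Lg in auto)
  show "((\<lambda>s. infsum (f s) UNIV) \<longlongrightarrow> infsum L UNIV) F"
  proof (rule tendstoI)
    fix e :: real assume e: "e > 0"
    obtain S where S: "finite S" and tail: "\<And>h. (\<And>n. \<bar>h n\<bar> \<le> g n) \<Longrightarrow> \<bar>infsum h UNIV - sum h S\<bar> \<le> e/4"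
      using infsum_uniform_tail[OF g, of "e/4"] e by auto
    have "((\<lambda>s. sum (f s) S) \<longlongrightarrow> sum L S) F"
      by (rule tendsto_sum) (use lim in auto)
    then have "eventually (\<lambda>s. dist (sum (f s) S) (sum L S) < e/4) F"
      using e by (intro tendstoD) auto
    then show "eventually (\<lambda>s. dist (infsum (f s) UNIV) (infsum L UNIV) < e) F"
      using dom
    proof eventually_elim
      case (elim s)
      have "\<bar>infsum (f s) UNIV - sum (f s) S\<bar> \<le> e/4" using tail elim(2) by blast
      moreover have "\<bar>infsum L UNIV - sum L S\<bar> \<le> e/4" using tail Lg by blast
      ultimately show ?case using elim(1) e by (simp add: dist_real_def) (smt (verit))
    qed
  qed
qed

lemma abs_diff_le_by_deriv_bound:
  fixes f f' :: "real \<Rightarrow> real"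
  assumes der: "\<And>x. (f has_real_derivative f' x) (at x)"
    and bnd: "\<And>x. \<bar>x\<bar> \<le> R \<Longrightarrow> \<bar>f' x\<bar> \<le> K"
    and x: "\<bar>x\<bar> \<le> R" and y: "\<bar>y\<bar> \<le> R"
  shows "\<bar>f x - f y\<bar> \<le> K * \<bar>x - y\<bar>"
proof -
  have main: "\<bar>f v - f u\<bar> \<le> K * \<bar>v - u\<bar>" if uv: "u < v" "\<bar>u\<bar> \<le> R" "\<bar>v\<bar> \<le> R" for u v
  proof -
    obtain z where z: "u < z" "z < v" "f v - f u = (v - u) * f' z"
      using MVT2[OF uv(1), of f f'] der by blast
    have "\<bar>f' z\<bar> \<le> K" using z uv by (intro bnd) auto
    then show ?thesis using z(3) uv(1) by (simp add: abs_mult mult.commute mult_left_mono)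
  qed
  show ?thesis
  proof (cases x y rule: linorder_cases)
    case less then show ?thesis using main[of x y] x y by (simp add: abs_minus_commute)
  next
    case equal then show ?thesis using bnd[OF x] by simp
  next
    case greater then show ?thesis using main[of y x] x y by simp
  qed
qed

lemma difference_quotient_tendsto:
  fixes f :: "real \<Rightarrow> real"
  assumes "(f has_real_derivative D) (at x)"
  shows "((\<lambda>s. (f (x + s * y) - f x) / s) \<longlongrightarrow> D * y) (at 0)"
proof -
  have "((\<lambda>s. x + s * y) has_real_derivative y) (at 0)" by (auto intro!: derivative_eq_intros)
  from DERIV_chain2[OF _ this, of f D] assms
  have "((\<lambda>s. f (x + s * y)) has_real_derivative D * y) (at 0)" by (simp add: mult.commute)
  then show ?thesis by (simp add: DERIV_def)
qed

lemma eventually_at_0_small: "eventually (\<lambda>s::real. s \<noteq> 0 \<and> \<bar>s\<bar> < 1) (at 0)"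
  by (auto simp: eventually_at dist_real_def intro!: exI[of _ 1])

lemma tendsto_of_difference_quotient:
  fixes f :: "real \<Rightarrow> real"
  assumes "((\<lambda>s. (f s - f 0) / s) \<longlongrightarrow> D) (at 0)"
  shows "(f \<longlongrightarrow> f 0) (at 0)"
proof -
  have "((\<lambda>s. f 0 + s * ((f s - f 0) / s)) \<longlongrightarrow> f 0 + 0 * D) (at 0)"
    by (intro tendsto_intros assms)
  moreover have "\<forall>\<^sub>F s in at 0. f 0 + s * ((f s - f 0) / s) = f s"
    using eventually_at_0_small by eventually_elim simp
  ultimately show ?thesis by (simp add: tendsto_cong)
qed

lemma perturbation_bounds:
  fixes f f' :: "real \<Rightarrow> real"
  assumes der: "\<And>x. (f has_real_derivative f' x) (at x)"
    and bnd: "\<And>x. \<bar>x\<bar> \<le> 2 * M \<Longrightarrow> \<bar>f' x\<bar> \<le> K"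
    and x: "\<bar>x\<bar> \<le> M" and y: "\<bar>y\<bar> \<le> M" and s: "\<bar>s\<bar> \<le> 1"
  shows "\<bar>f (x + s * y) - f x\<bar> \<le> K * (\<bar>s\<bar> * M)" and "\<bar>f (x + s * y)\<bar> \<le> \<bar>f 0\<bar> + 2 * K * M"
proof -
  have M0: "0 \<le> M" using x by linarith
  have K0: "0 \<le> K" using bnd[of 0] M0 by force
  have "\<bar>s * y\<bar> \<le> 1 * M" unfolding abs_mult using s y by (intro mult_mono) auto
  then have near: "\<bar>x + s * y\<bar> \<le> 2 * M" using x abs_triangle_ineq[of x "s * y"] by linarith
  have "\<bar>f (x + s * y) - f x\<bar> \<le> K * \<bar>(x + s * y) - x\<bar>"
    by (rule abs_diff_le_by_deriv_bound[OF der bnd near]) (use x M0 in auto)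
  also have "\<dots> \<le> K * (\<bar>s\<bar> * M)" using y K0 by (auto simp: abs_mult intro!: mult_left_mono)
  finally show "\<bar>f (x + s * y) - f x\<bar> \<le> K * (\<bar>s\<bar> * M)" .
  show "\<bar>f (x + s * y)\<bar> \<le> \<bar>f 0\<bar> + 2 * K * M"
    using abs_diff_le_by_deriv_bound[OF der bnd near, of 0] mult_left_mono[OF near K0] M0 by simp
qed

lemma infsum_directional_derivative:
  fixes f f' :: "real \<Rightarrow> real" and u v w :: "'a \<Rightarrow> real"
  assumes der: "\<And>x. (f has_real_derivative f' x) (at x)"
    and bnd: "\<And>x. \<bar>x\<bar> \<le> 2 * M \<Longrightarrow> \<bar>f' x\<bar> \<le> K"
    and u: "\<And>n. \<bar>u n\<bar> \<le> M" and v: "\<And>n. \<bar>v n\<bar> \<le> M"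
    and w: "w summable_on UNIV" and w0: "\<And>n. 0 \<le> w n"
  shows "(\<lambda>n. w n * f' (u n) * v n) summable_on UNIV"
    and "((\<lambda>s. (infsum (\<lambda>n. w n * f (u n + s * v n)) UNIV - infsum (\<lambda>n. w n * f (u n)) UNIV) / s)
          \<longlongrightarrow> infsum (\<lambda>n. w n * f' (u n) * v n) UNIV) (at 0)"
proof -
  have summ: "(\<lambda>n. w n * f (u n + s * v n)) summable_on UNIV" if "\<bar>s\<bar> \<le> 1" for s
  proof (rule summable_on_real_comparison)
    show "(\<lambda>n. w n * (\<bar>f 0\<bar> + 2 * K * M)) summable_on UNIV" using summable_on_cmult_left[OF w] by simp
    show "\<bar>w n * f (u n + s * v n)\<bar> \<le> w n * (\<bar>f 0\<bar> + 2 * K * M)" for n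
      using perturbation_bounds(2)[OF der bnd u[of n] v[of n] that] w0[of n] by (simp add: abs_mult mult_left_mono)
  qed
  define g where "g s n = w n * ((f (u n + s * v n) - f (u n)) / s)" for s n
  have dom: "\<forall>\<^sub>F s in at 0. \<forall>n. \<bar>g s n\<bar> \<le> w n * (K * M)"
    using eventually_at_0_small
  proof eventually_elim
    case (elim s)
    have "\<bar>(f (u n + s * v n) - f (u n)) / s\<bar> \<le> K * M" for n
      using perturbation_bounds(1)[OF der bnd u[of n] v[of n], of s] elim by (simp add: abs_divide field_simps)
    then show ?case
      using w0 by (auto simp: g_def abs_mult simp del: times_divide_eq_right intro: mult_left_mono)
  qed
  have lim: "((\<lambda>s. g s n) \<longlongrightarrow> w n * (f' (u n) * v n)) (at 0)" for n
    unfolding g_def by (intro tendsto_mult_left difference_quotient_tendsto der)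
  note DC = infsum_dominated_convergence[OF summable_on_cmult_left[OF w] dom lim at_neq_bot]
  show "(\<lambda>n. w n * f' (u n) * v n) summable_on UNIV" using DC(1) by (simp add: mult.assoc)
  have "\<forall>\<^sub>F s in at 0. infsum (g s) UNIV =
      (infsum (\<lambda>n. w n * f (u n + s * v n)) UNIV - infsum (\<lambda>n. w n * f (u n)) UNIV) / s"
    using eventually_at_0_small
  proof eventually_elim
    case (elim s)
    have "infsum (g s) UNIV = infsum (\<lambda>n. (w n * f (u n + s * v n) - w n * f (u n)) / s) UNIV"
      unfolding g_def by (simp add: right_diff_distrib)
    also have "\<dots> = infsum (\<lambda>n. w n * f (u n + s * v n) - w n * f (u n)) UNIV / s"
      by (simp only: divide_inverse infsum_cmult_left')
    also have "\<dots> = (infsum (\<lambda>n. w n * f (u n + s * v n)) UNIV - infsum (\<lambda>n. w n * f (u n)) UNIV) / s"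
      using infsum_diff[OF summ summ[of 0]] elim by simp
    finally show ?case .
  qed
  then show "((\<lambda>s. (infsum (\<lambda>n. w n * f (u n + s * v n)) UNIV - infsum (\<lambda>n. w n * f (u n)) UNIV) / s)
          \<longlongrightarrow> infsum (\<lambda>n. w n * f' (u n) * v n) UNIV) (at 0)"
    using tendsto_cong DC(2) by (fastforce simp: mult.assoc)
qed

section \<open>Elementary inequalities and compactness\<close>

lemma powr_mult_neg_ln_le:
  fixes y e :: real
  assumes y: "0 < y" "y \<le> 1" and e: "0 < e"
  shows "y powr e * (- ln y) \<le> 1 / e"
proof -
  define z where "z = y powr e"
  have z: "0 < z" "z \<le> 1" using y e by (auto simp: z_def intro: powr_le1)
  have "- ln z \<le> 1 / z" using z ln_le_minus_one[of "1/z"] by (simp add: ln_div)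
  moreover have "ln z = e * ln y" using y by (simp add: z_def ln_powr)
  ultimately have "z * (- (e * ln y)) \<le> z * (1 / z)" using z by (intro mult_left_mono) auto
  then have "e * (z * (- ln y)) \<le> 1" using z by (simp add: algebra_simps)
  then show ?thesis using e unfolding z_def by (simp add: field_simps)
qed

lemma powr_mult_abs_ln_le:
  fixes y e :: real
  assumes y: "0 < y" and e: "0 < e"
  shows "y powr e * \<bar>ln y\<bar> \<le> 1 / e + y powr (e + 1)"
proof (cases "y \<le> 1")
  case True
  have "y powr e * \<bar>ln y\<bar> \<le> 1 / e" using powr_mult_neg_ln_le[OF y True e] y True by simp
  then show ?thesis using powr_ge_zero[of y "e + 1"] by linarith
next
  case False
  have "ln y \<le> y" using y ln_le_minus_one[of y] by simp
  then have "y powr e * \<bar>ln y\<bar> \<le> y powr e * y" using False by (intro mult_left_mono) auto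
  also have "\<dots> = y powr (e + 1)" using y by (simp add: powr_add)
  finally show ?thesis using e by (smt (verit) divide_pos_pos)
qed

lemma power_abs_add_le: "(\<bar>x\<bar> + \<bar>y\<bar>) ^ k \<le> 2 ^ k * (\<bar>x\<bar> ^ k + \<bar>y\<bar> ^ k :: real)"
proof -
  define M where "M = max \<bar>x\<bar> \<bar>y\<bar>"
  have "(\<bar>x\<bar> + \<bar>y\<bar>) ^ k \<le> (2 * M) ^ k" by (intro power_mono) (auto simp: M_def)
  also have "\<dots> = 2 ^ k * M ^ k" by (simp add: power_mult_distrib)
  also have "M ^ k \<le> \<bar>x\<bar> ^ k + \<bar>y\<bar> ^ k" by (auto simp: M_def max_def)
  finally show ?thesis by simp
qed

lemma power_difference_quotient_le:
  fixes x y s :: real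
  assumes s: "s \<noteq> 0" "\<bar>s\<bar> \<le> 1" and k: "1 \<le> k"
  shows "\<bar>((x + s * y) ^ k - x ^ k) / s\<bar> \<le> real k * 2 ^ k * (\<bar>x\<bar> ^ k + \<bar>y\<bar> ^ k)"
proof -
  define R where "R = \<bar>x\<bar> + \<bar>y\<bar>"
  have der: "((\<lambda>x. x ^ k) has_real_derivative real k * z ^ (k - 1)) (at z)" for z :: real
    by (auto intro!: derivative_eq_intros)
  have bnd: "\<bar>real k * z ^ (k - 1)\<bar> \<le> real k * R ^ (k - 1)" if "\<bar>z\<bar> \<le> R" for z :: real
    using power_mono[OF that, of "k - 1"] by (simp add: abs_mult power_abs mult_left_mono)
  have "\<bar>s * y\<bar> \<le> \<bar>y\<bar>" using s by (simp add: abs_mult mult_left_le_one_le)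
  then have xs: "\<bar>x + s * y\<bar> \<le> R" unfolding R_def using abs_triangle_ineq[of x "s * y"] by linarith
  have x: "\<bar>x\<bar> \<le> R" unfolding R_def by simp
  have "\<bar>(x + s * y) ^ k - x ^ k\<bar> \<le> real k * R ^ (k - 1) * \<bar>(x + s * y) - x\<bar>"
    by (rule abs_diff_le_by_deriv_bound[OF der bnd xs x])
  also have "\<dots> = \<bar>s\<bar> * (real k * R ^ (k - 1) * \<bar>y\<bar>)" by (simp add: abs_mult)
  finally have "\<bar>((x + s * y) ^ k - x ^ k) / s\<bar> \<le> real k * R ^ (k - 1) * \<bar>y\<bar>"
    using s by (simp add: field_simps abs_divide)
  also have "\<dots> \<le> real k * R ^ (k - 1) * R" by (intro mult_left_mono) (auto simp: R_def)
  also have "\<dots> = real k * R ^ k" using k by (simp add: power_eq_if)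
  also have "\<dots> \<le> real k * (2 ^ k * (\<bar>x\<bar> ^ k + \<bar>y\<bar> ^ k))"
    unfolding R_def by (intro mult_left_mono power_abs_add_le) auto
  finally show ?thesis by simp
qed

lemma power_superadditive:
  fixes x y :: real
  assumes "0 \<le> x" "0 \<le> y" "k \<noteq> 0"
  shows "x ^ k + y ^ k \<le> (x + y) ^ k"
proof -
  obtain n where k: "k = Suc n" using assms(3) not0_implies_Suc by blast
  have "x ^ Suc n + y ^ Suc n \<le> (x + y) ^ Suc n"
  proof (induction n)
    case (Suc n)
    have "x ^ Suc (Suc n) + y ^ Suc (Suc n) \<le> (x + y) * (x ^ Suc n + y ^ Suc n)"
      using assms by (simp add: algebra_simps)
    also have "\<dots> \<le> (x + y) * (x + y) ^ Suc n"
      using Suc assms by (intro mult_left_mono) auto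
    finally show ?case by simp
  qed simp
  then show ?thesis by (simp add: k)
qed

lemma compact_bounded_functions: "compact {f :: 'a \<Rightarrow> real. \<forall>n. \<bar>f n\<bar> \<le> M}"
proof -
  have "{f :: 'a \<Rightarrow> real. \<forall>n. \<bar>f n\<bar> \<le> M} = PiE UNIV (\<lambda>_. {-M..M})"
    by (auto simp: PiE_def Pi_def abs_le_iff) (metis minus_le_iff)+
  moreover have "compactin (product_topology (\<lambda>i. euclidean) UNIV) (PiE (UNIV :: 'a set) (\<lambda>_. {-M..M::real}))"
    by (simp add: compactin_PiE)
  ultimately show ?thesis
    by (simp add: euclidean_product_topology compactin_euclidean_iff)
qed

lemma bounded_functions_pointwise_convergent_subseq:
  fixes v :: "nat \<Rightarrow> 'a::countable \<Rightarrow> real"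
  assumes "\<And>k n. \<bar>v k n\<bar> \<le> M"
  obtains \<sigma> l where "strict_mono \<sigma>" "\<And>n. (\<lambda>k. v (\<sigma> k) n) \<longlonglongrightarrow> l n"
proof -
  have "seq_compact {f :: 'a \<Rightarrow> real. \<forall>n. \<bar>f n\<bar> \<le> M}"
    by (rule compact_imp_seq_compact[OF compact_bounded_functions])
  then obtain l \<sigma> where "l \<in> {f :: 'a \<Rightarrow> real. \<forall>n. \<bar>f n\<bar> \<le> M}" and \<sigma>: "strict_mono \<sigma>"
      and lim: "(v \<circ> \<sigma>) \<longlonglongrightarrow> l"
    unfolding seq_compact_def using assms by blast
  have "(\<lambda>k. v (\<sigma> k) n) \<longlonglongrightarrow> l n" for n
    using continuous_on_tendsto_compose[of UNIV "\<lambda>f :: 'a \<Rightarrow> real. f n", OF _ lim] by (simp add: o_def)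
  then show ?thesis using that \<sigma> by blast
qed

lemma exists_minimizing_sequence:
  fixes f :: "'a \<Rightarrow> real"
  assumes "S \<noteq> {}" "bdd_below (f ` S)"
  obtains x where "\<And>k. x k \<in> S" "(\<lambda>k. f (x k)) \<longlonglongrightarrow> Inf (f ` S)"
proof -
  have "\<exists>y\<in>S. f y < Inf (f ` S) + inverse (real (Suc k))" for k
    using cInf_lessD[of "f ` S" "Inf (f ` S) + inverse (real (Suc k))"] assms(1) by force
  then obtain x where x: "\<And>k. x k \<in> S" "\<And>k. f (x k) < Inf (f ` S) + inverse (real (Suc k))"
    by metis
  have "(\<lambda>k. f (x k)) \<longlonglongrightarrow> Inf (f ` S)"
  proof (rule tendsto_sandwich[of "\<lambda>k. Inf (f ` S)" _ _ "\<lambda>k. Inf (f ` S) + inverse (real (Suc k))"])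
    show "\<forall>\<^sub>F k in sequentially. Inf (f ` S) \<le> f (x k)"
      by (intro always_eventually allI cInf_lower imageI x(1) assms(2))
    show "\<forall>\<^sub>F k in sequentially. f (x k) \<le> Inf (f ` S) + inverse (real (Suc k))"
      by (intro always_eventually allI less_imp_le x(2))
    show "(\<lambda>k. Inf (f ` S) + inverse (real (Suc k))) \<longlonglongrightarrow> Inf (f ` S)"
      using tendsto_add[OF tendsto_const LIMSEQ_inverse_real_of_nat] by simp
  qed simp
  then show ?thesis using that x(1) by blast
qed

context
  fixes m :: nat
  assumes m_even: "even m" and m_pos: "m \<noteq> 0"
begin

private lemma power_pred_mult: "x ^ (m - 1) * x = (x :: real) ^ m"
  using m_pos by (simp add: power_eq_if)

private lemma power_pred_minus: "(- x) ^ (m - 1) = - ((x :: real) ^ (m - 1))"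
  using m_even m_pos by (simp add: power_minus_odd)

lemma pos_part_diff_power_le:
  "(max x 0 - max y 0) ^ m \<le> (x - y) ^ (m - 1) * (max x 0 - max (y :: real) 0)"
proof (cases "0 \<le> x"; cases "0 \<le> y")
  assume "0 \<le> x" "\<not> 0 \<le> y"
  then have "x ^ (m - 1) * x \<le> (x - y) ^ (m - 1) * x" by (intro mult_right_mono power_mono) auto
  then show ?thesis using \<open>0 \<le> x\<close> \<open>\<not> 0 \<le> y\<close> power_pred_mult[of x] by simp
next
  assume "\<not> 0 \<le> x" "0 \<le> y"
  then have "y ^ (m - 1) * y \<le> (y - x) ^ (m - 1) * y" by (intro mult_right_mono power_mono) auto
  moreover have "(x - y) ^ (m - 1) = - ((y - x) ^ (m - 1))" using power_pred_minus[of "y - x"] by simp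
  ultimately show ?thesis using \<open>\<not> 0 \<le> x\<close> \<open>0 \<le> y\<close> m_even power_pred_mult[of y] by simp
qed (use m_pos power_pred_mult[of "x - y"] in \<open>simp_all add: power_0_left\<close>)

lemma neg_part_diff_power_le:
  "(min x 0 - min y 0) ^ m \<le> (x - y) ^ (m - 1) * (min x 0 - min (y :: real) 0)"
proof -
  have "max (- x) 0 - max (- y) 0 = - (min x 0 - min y 0)" by (simp add: max_def min_def)
  moreover have "(- x - - y) ^ (m - 1) = - ((x - y) ^ (m - 1))" using power_pred_minus[of "x - y"] by simp
  ultimately show ?thesis
    using pos_part_diff_power_le[of "- x" "- y"] by (simp only: power_minus_even[OF m_even] minus_mult_minus)
qed

lemma pos_neg_parts_diff_power_le:
  "(max x 0 - max y 0) ^ m + (min x 0 - min y 0) ^ m \<le> ((x :: real) - y) ^ m"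
proof (cases "0 \<le> x"; cases "0 \<le> y")
  assume "0 \<le> x" "\<not> 0 \<le> y"
  then show ?thesis using power_superadditive[of x "- y" m] m_pos by simp
next
  assume "\<not> 0 \<le> x" "0 \<le> y"
  then have "y ^ m + (- x) ^ m \<le> (y - x) ^ m" using power_superadditive[of y "- x" m] m_pos by simp
  moreover have "(x - y) ^ m = (y - x) ^ m" using power_minus_even[OF m_even, of "y - x"] by simp
  ultimately show ?thesis using \<open>\<not> 0 \<le> x\<close> \<open>0 \<le> y\<close> m_even by (simp add: add.commute)
qed (use m_pos in \<open>simp_all add: power_0_left\<close>)

end

lemma phi_mult_self: "phi s x * x = \<bar>x\<bar> powr s"
proof (cases "x = 0")
  case False
  have "phi s x * x = \<bar>x\<bar> powr (s - 2) * (x * x)" by (simp add: phi_def mult.assoc)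
  also have "x * x = \<bar>x\<bar> powr 2" using False by (simp add: powr_realpow power2_eq_square)
  also have "\<bar>x\<bar> powr (s - 2) * \<bar>x\<bar> powr 2 = \<bar>x\<bar> powr s" by (metis powr_add diff_add_cancel)
  finally show ?thesis .
qed (simp add: phi_def)

lemma abs_phi: "\<bar>phi s x\<bar> = \<bar>x\<bar> powr (s - 1)"
proof (cases "x = 0")
  case False
  then show ?thesis using powr_add[of "\<bar>x\<bar>" "s - 2" 1] by (simp add: phi_def abs_mult)
qed (simp add: phi_def)

lemma continuous_bounded_on_interval:
  fixes f :: "real \<Rightarrow> real"
  assumes "\<And>x. isCont f x"
  obtains K where "\<And>x. \<bar>x\<bar> \<le> M \<Longrightarrow> \<bar>f x\<bar> \<le> K"
proof -
  have "compact (f ` {-M..M})"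
    by (rule compact_continuous_image) (use assms continuous_at_imp_continuous_on in auto)
  then obtain K where K: "\<forall>y \<in> f ` {-M..M}. norm y \<le> K" using compact_imp_bounded bounded_iff by metis
  show ?thesis by (rule that[of K]) (use K in \<open>auto simp: abs_le_iff\<close>)
qed

section \<open>The functional setting\<close>

text \<open>The exponent \<open>p\<close> is the even integer \<open>m\<close>, so that \<open>\<bar>x\<bar> powr p = x ^ m\<close> is a
  polynomial.\<close>

locale log_p_laplacian =
  fixes p q r :: real and a b c :: "int \<Rightarrow> real" and m :: nat and b0 :: real
  assumes p_eq: "p = real m" and m_even: "even m" and m_ge: "2 \<le> m"
    and p_less_q: "p < q" and r_ge: "1 \<le> r"
    and a_pos: "\<And>n. 0 < a n" and c_pos: "\<And>n. 0 < c n"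
    and b0_pos: "0 < b0" and b_ge: "\<And>n. b0 \<le> b n"
    and c_summable: "c summable_on UNIV"
begin

abbreviation "E \<equiv> spaceE p a b"
abbreviation "nt u \<equiv> norm_term p a b u"
abbreviation "nrm u \<equiv> normp p a b u"
abbreviation "I \<equiv> energyI p q r a b c"
abbreviation "I' \<equiv> dI p q r a b c"
abbreviation "Nehari \<equiv> nehari p q r a b c"

definition powq :: "real \<Rightarrow> real" where
  "powq x = \<bar>x\<bar> powr q"

text \<open>Unlike \<open>log_term\<close>, no case split at \<open>0\<close> is needed: \<open>0 powr q = 0\<close>.\<close>

definition lnpowq :: "real \<Rightarrow> real" where
  "lnpowq x = \<bar>x\<bar> powr q * ln (\<bar>x\<bar> powr r)"

definition power_sum :: "(int \<Rightarrow> real) \<Rightarrow> real" where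
  "power_sum u = (\<Sum>\<^sub>\<infinity>n. c n * powq (u n))"

definition log_sum :: "(int \<Rightarrow> real) \<Rightarrow> real" where
  "log_sum u = (\<Sum>\<^sub>\<infinity>n. log_term q r c u n)"

definition reduced_energy :: "(int \<Rightarrow> real) \<Rightarrow> real" where
  "reduced_energy u = (1/p - 1/q) * nrm u + r / q\<^sup>2 * power_sum u"

lemma p_ge_2: "2 \<le> p" using p_eq m_ge by simp
lemma q_gt_1: "1 < q" using p_ge_2 p_less_q by simp
lemma reduced_coeff_pos: "0 < 1/p - 1/q" using p_ge_2 p_less_q by (simp add: field_simps)
lemma b_pos: "0 < b n" using b0_pos b_ge[of n] by simp
lemma c_nonneg: "0 \<le> c n" using c_pos[of n] by simp

lemma even_power_nonneg: "0 \<le> (x :: real) ^ m"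
  using m_even by (simp add: zero_le_even_power)

lemma abs_powr_p: "\<bar>x\<bar> powr p = x ^ m"
  using m_ge m_even p_eq by (cases "x = 0") (simp_all add: powr_realpow power_even_abs)

lemma powr_p: "0 < t \<Longrightarrow> t powr p = t ^ m"
  using abs_powr_p[of t] by simp

lemma phi_p: "phi p x = x ^ (m - 1)"
proof (cases "x = 0")
  case False
  have "phi p x = \<bar>x\<bar> powr real (m - 2) * x" using p_eq m_ge by (simp add: phi_def of_nat_diff)
  also have "\<dots> = \<bar>x\<bar> ^ (m - 2) * x" using False by (simp add: powr_realpow)
  also have "\<dots> = x ^ (m - 2) * x" using m_even m_ge by (simp add: power_even_abs)
  also have "\<dots> = x ^ (m - 1)" using m_ge by (simp add: power_Suc2[symmetric] Suc_diff_Suc numeral_2_eq_2)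
  finally show ?thesis .
qed (use m_ge in \<open>simp add: phi_def\<close>)

lemma norm_term_eq: "nt u n = a n * (fdiff u n) ^ m + b n * (u n) ^ m"
  by (simp add: norm_term_def abs_powr_p)

lemma norm_term_nonneg: "0 \<le> nt u n"
  using a_pos[of n] b_pos[of n] by (simp add: norm_term_eq even_power_nonneg)

lemma normp_nonneg: "0 \<le> nrm u"
  unfolding normp_def by (rule infsum_nonneg) (rule norm_term_nonneg)

lemma norm_term_le_normp: "u \<in> E \<Longrightarrow> nt u n \<le> nrm u"
  using sum_le_infsum_nonneg[of "nt u" "{n}"] norm_term_nonneg by (simp add: spaceE_def normp_def)

lemma power_le_normp: "u \<in> E \<Longrightarrow> b0 * (u n) ^ m \<le> nrm u"
proof -
  assume u: "u \<in> E"
  have "b0 * (u n) ^ m \<le> b n * (u n) ^ m" using b_ge[of n] by (intro mult_right_mono even_power_nonneg)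
  also have "\<dots> \<le> nt u n" using a_pos[of n] by (simp add: norm_term_eq even_power_nonneg)
  also have "\<dots> \<le> nrm u" using norm_term_le_normp[OF u] .
  finally show ?thesis .
qed

lemma abs_le_normp: "u \<in> E \<Longrightarrow> \<bar>u n\<bar> \<le> max 1 (nrm u / b0)"
proof (cases "\<bar>u n\<bar> \<le> 1")
  case False
  assume u: "u \<in> E"
  have "\<bar>u n\<bar> \<le> \<bar>u n\<bar> ^ m" using False m_ge by (metis power_one_right power_increasing
      linorder_not_le less_imp_le one_le_numeral order_trans)
  also have "\<dots> = (u n) ^ m" using m_even by (simp add: power_even_abs)
  also have "\<dots> \<le> nrm u / b0" using power_le_normp[OF u] b0_pos by (simp add: field_simps)
  finally show ?thesis by simp
qed simp

lemma normp_pos: "u \<in> E \<Longrightarrow> u \<noteq> (\<lambda>n. 0) \<Longrightarrow> 0 < nrm u"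
proof -
  assume u: "u \<in> E" "u \<noteq> (\<lambda>n. 0)"
  then obtain n where "u n \<noteq> 0" by auto
  then have "0 < b0 * (u n) ^ m" using b0_pos m_even by (simp add: zero_less_power_eq)
  then show ?thesis using power_le_normp[OF u(1), of n] by linarith
qed

lemma square_powr: "((x::real) * x) powr e = \<bar>x\<bar> powr (2 * e)"
proof -
  have "(x * x) powr e = (\<bar>x\<bar> * \<bar>x\<bar>) powr e" by (simp only: abs_mult_self_eq)
  also have "\<dots> = \<bar>x\<bar> powr e * \<bar>x\<bar> powr e" by (rule powr_mult)
  also have "\<dots> = \<bar>x\<bar> powr (2 * e)" by (metis powr_add mult_2)
  finally show ?thesis .
qed

lemma powq_alt: "powq x = (x * x) powr (q / 2)"
  by (simp add: powq_def square_powr)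

lemma lnpowq_alt: "lnpowq x = powq x * (r / 2 * ln (x * x))"
proof (cases "x = 0")
  case False
  have "ln (x * x) = ln (\<bar>x\<bar> * \<bar>x\<bar>)" by (simp only: abs_mult_self_eq)
  also have "\<dots> = 2 * ln \<bar>x\<bar>" using False by (subst ln_mult) auto
  finally have "ln (x * x) = 2 * ln \<bar>x\<bar>" .
  then show ?thesis using False by (simp add: lnpowq_def powq_def ln_powr)
qed (simp add: lnpowq_def powq_def)

lemma tendsto_abs_powr_at_0: "0 < e \<Longrightarrow> ((\<lambda>h::real. \<bar>h\<bar> powr e) \<longlongrightarrow> 0) (at 0)"
  using tendsto_powr'[OF tendsto_rabs[OF tendsto_ident_at[of 0 UNIV]] tendsto_const] by simp

lemma powq_deriv: "(powq has_real_derivative q * phi q x) (at x)"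
proof (cases "x = 0")
  case False
  have xx: "0 < x * x" using False not_real_square_gt_zero by blast
  have d: "((\<lambda>x. x * x) has_real_derivative (x + x)) (at x)" by (auto intro!: derivative_eq_intros)
  have "((\<lambda>x. (x * x) powr (q / 2)) has_real_derivative q / 2 * (x * x) powr (q / 2 - of_nat 1) * (x + x)) (at x)"
    by (rule DERIV_fun_powr[OF d xx])
  moreover have "(x * x) powr (q / 2 - 1) = \<bar>x\<bar> powr (q - 2)"
    by (simp add: square_powr algebra_simps)
  moreover have "powq = (\<lambda>x. (x * x) powr (q / 2))" by (rule ext) (rule powq_alt)
  ultimately show ?thesis by (simp add: phi_def algebra_simps)
next
  case True
  have "((\<lambda>h. (powq (0 + h) - powq 0) / h) \<longlongrightarrow> 0) (at 0)"
  proof (rule Lim_null_comparison[OF _ tendsto_abs_powr_at_0])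
    show "\<forall>\<^sub>F h in at 0. norm ((powq (0 + h) - powq 0) / h) \<le> \<bar>h\<bar> powr (q - 1)"
    proof (intro always_eventually allI)
      fix h :: real
      show "norm ((powq (0 + h) - powq 0) / h) \<le> \<bar>h\<bar> powr (q - 1)"
      proof (cases "h = 0")
        case False
        then have "norm ((powq (0 + h) - powq 0) / h) = \<bar>h\<bar> powr q / \<bar>h\<bar> powr 1"
          by (simp add: powq_def)
        also have "\<dots> = \<bar>h\<bar> powr (q - 1)" by (simp add: powr_diff)
        finally show ?thesis by simp
      qed simp
    qed
  qed (use q_gt_1 in simp)
  then have "(powq has_real_derivative 0) (at 0)" by (simp add: DERIV_def)
  then show ?thesis using True by (simp only: phi_def abs_zero mult_zero_right)
qed

lemma lnpowq_quotient_at_0_le: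
  assumes h: "h \<noteq> 0" "\<bar>h\<bar> < 1"
  shows "norm ((lnpowq (0 + h) - lnpowq 0) / h) \<le> r * (2 / (q - 1)) * \<bar>h\<bar> powr ((q - 1) / 2)"
proof -
  define y where "y = \<bar>h\<bar>"
  define e where "e = (q - 1) / 2"
  have y: "0 < y" "y \<le> 1" using h by (auto simp: y_def)
  have e: "0 < e" using q_gt_1 by (simp add: e_def)
  have "norm ((lnpowq (0 + h) - lnpowq 0) / h) = r * (y powr q / y powr 1 * (- ln y))"
    using h y r_ge by (simp add: lnpowq_def y_def ln_powr abs_mult abs_divide)
  also have "y powr q / y powr 1 = y powr (q - 1)" by (simp add: powr_diff)
  also have "\<dots> = y powr e * y powr e" by (simp add: e_def powr_add[symmetric])
  also have "y powr e * y powr e * (- ln y) \<le> y powr e * (1 / e)"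
    using mult_left_mono[OF powr_mult_neg_ln_le[OF y e], of "y powr e"] by (simp add: mult.assoc)
  finally show ?thesis using r_ge by (simp add: e_def y_def mult_left_mono mult_ac)
qed

lemma lnpowq_deriv: "(lnpowq has_real_derivative (q * ln (\<bar>x\<bar> powr r) + r) * phi q x) (at x)"
proof (cases "x = 0")
  case False
  have xx: "0 < x * x" using False not_real_square_gt_zero by blast
  have "ln (x * x) = ln (\<bar>x\<bar> * \<bar>x\<bar>)" by (simp only: abs_mult_self_eq)
  also have "\<dots> = 2 * ln \<bar>x\<bar>" using False by (subst ln_mult) auto
  finally have ln_sq: "r / 2 * ln (x * x) = ln (\<bar>x\<bar> powr r)" using False by (simp add: ln_powr)
  have "((\<lambda>x. r / 2 * ln (x * x)) has_real_derivative r / 2 * ((x + x) / (x * x))) (at x)"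
    using xx by (auto intro!: derivative_eq_intros)
  from DERIV_mult[OF powq_deriv this]
  have "((\<lambda>x. powq x * (r / 2 * ln (x * x))) has_real_derivative
      q * phi q x * (r / 2 * ln (x * x)) + r / 2 * ((x + x) / (x * x)) * powq x) (at x)" .
  moreover have "lnpowq = (\<lambda>x. powq x * (r / 2 * ln (x * x)))" by (rule ext) (rule lnpowq_alt)
  moreover have "r / 2 * ((x + x) / (x * x)) * powq x = r * phi q x"
    using False phi_mult_self[of q x] by (simp add: powq_def field_simps)
  moreover have "q * phi q x * ln (\<bar>x\<bar> powr r) + r * phi q x = (q * ln (\<bar>x\<bar> powr r) + r) * phi q x"
    by (simp only: ring_distribs mult.commute mult.left_commute)
  ultimately show ?thesis unfolding ln_sq by metis
next
  case True
  have "((\<lambda>h. (lnpowq (0 + h) - lnpowq 0) / h) \<longlongrightarrow> 0) (at 0)"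
  proof (rule Lim_null_comparison[OF _ tendsto_mult_right_zero[OF tendsto_abs_powr_at_0]])
    show "\<forall>\<^sub>F h in at 0. norm ((lnpowq (0 + h) - lnpowq 0) / h) \<le> r * (2 / (q - 1)) * \<bar>h\<bar> powr ((q - 1) / 2)"
      using eventually_at_0_small by eventually_elim (intro lnpowq_quotient_at_0_le, auto)
  qed (use q_gt_1 in simp)
  then have "(lnpowq has_real_derivative 0) (at 0)" by (simp add: DERIV_def)
  then show ?thesis using True by (simp only: phi_def abs_zero mult_zero_right)
qed

lemma isCont_powq: "isCont powq x"
  by (rule DERIV_isCont[OF powq_deriv])

lemma isCont_lnpowq: "isCont lnpowq x"
  by (rule DERIV_isCont[OF lnpowq_deriv])

lemma powq_deriv_bound: "\<bar>x\<bar> \<le> R \<Longrightarrow> \<bar>q * phi q x\<bar> \<le> q * max 1 R powr q"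
proof -
  assume x: "\<bar>x\<bar> \<le> R"
  have "\<bar>x\<bar> powr (q - 1) \<le> max 1 R powr (q - 1)" using x q_gt_1 by (intro powr_mono2) auto
  also have "\<dots> \<le> max 1 R powr q" by (intro powr_mono) auto
  finally show ?thesis using q_gt_1 by (simp add: abs_mult abs_phi)
qed

lemma lnpowq_deriv_bound:
  assumes x: "\<bar>x\<bar> \<le> R"
  shows "\<bar>(q * ln (\<bar>x\<bar> powr r) + r) * phi q x\<bar> \<le> r * (q / (q - 1) + (q + 1) * max 1 R powr q)"
proof (cases "x = 0")
  case True
  then show ?thesis using r_ge q_gt_1 by (simp add: phi_def)
next
  case False
  define y where "y = \<bar>x\<bar>"
  define R1 where "R1 = max 1 R"
  have y: "0 < y" "y \<le> R1" using False x by (auto simp: y_def R1_def)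
  have R1: "1 \<le> R1" by (simp add: R1_def)
  have yq: "y powr q \<le> R1 powr q" and yq1: "y powr (q - 1) \<le> R1 powr q"
    using y R1 q_gt_1 powr_mono2[of "q - 1" y R1] powr_mono[of "q - 1" q R1]
    by (auto intro: powr_mono2)
  have "(q * ln (\<bar>x\<bar> powr r) + r) * phi q x = r * ((q * ln y + 1) * phi q x)"
    by (simp add: y_def algebra_simps)
  then have "\<bar>(q * ln (\<bar>x\<bar> powr r) + r) * phi q x\<bar> = r * (\<bar>q * ln y + 1\<bar> * y powr (q - 1))"
    using r_ge by (simp only: abs_mult abs_phi y_def abs_of_nonneg[of r])
  also have "\<dots> \<le> r * ((q * \<bar>ln y\<bar> + 1) * y powr (q - 1))"
    using r_ge q_gt_1 abs_triangle_ineq[of "q * ln y" 1]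
    by (intro mult_left_mono mult_right_mono) (auto simp: abs_mult)
  also have "\<dots> = r * (q * (y powr (q - 1) * \<bar>ln y\<bar>) + y powr (q - 1))" by (simp add: algebra_simps)
  also have "\<dots> \<le> r * (q * (1 / (q - 1) + y powr q) + R1 powr q)"
    using powr_mult_abs_ln_le[OF y(1), of "q - 1"] q_gt_1 r_ge yq1
    by (intro mult_left_mono add_mono) auto
  also have "\<dots> \<le> r * (q / (q - 1) + (q + 1) * R1 powr q)"
    using yq q_gt_1 r_ge by (intro mult_left_mono) (auto simp: algebra_simps)
  finally show ?thesis by (simp add: R1_def)
qed

lemma weighted_summable:
  fixes f :: "real \<Rightarrow> real"
  assumes "\<And>x. isCont f x" and "\<And>n. \<bar>u n\<bar> \<le> M"
  shows "(\<lambda>n. c n * f (u n)) summable_on UNIV"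
proof -
  obtain K where K: "\<And>x. \<bar>x\<bar> \<le> M \<Longrightarrow> \<bar>f x\<bar> \<le> K"
    using continuous_bounded_on_interval[OF assms(1)] by blast
  have "\<bar>c n * f (u n)\<bar> \<le> c n * K" for n
    using mult_left_mono[OF K[OF assms(2)] c_nonneg] by (simp add: abs_mult c_nonneg)
  then show ?thesis by (rule summable_on_real_comparison[OF summable_on_cmult_left[OF c_summable]])
qed

lemma weighted_sum_tendsto:
  fixes f :: "real \<Rightarrow> real"
  assumes f: "\<And>x. isCont f x" and bound: "\<And>k n. \<bar>v k n\<bar> \<le> M"
    and lim: "\<And>n. (\<lambda>k. v k n) \<longlonglongrightarrow> l n"
  shows "(\<lambda>k. \<Sum>\<^sub>\<infinity>n. c n * f (v k n)) \<longlonglongrightarrow> (\<Sum>\<^sub>\<infinity>n. c n * f (l n))"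
proof -
  obtain K where K: "\<And>x. \<bar>x\<bar> \<le> M \<Longrightarrow> \<bar>f x\<bar> \<le> K"
    using continuous_bounded_on_interval[OF f] by blast
  show ?thesis
  proof (rule infsum_dominated_convergence(2)[OF summable_on_cmult_left[OF c_summable, of K]])
    show "\<forall>\<^sub>F k in sequentially. \<forall>n. \<bar>c n * f (v k n)\<bar> \<le> c n * K"
      using mult_left_mono[OF K[OF bound] c_nonneg] by (simp add: abs_mult c_nonneg)
    show "(\<lambda>k. c n * f (v k n)) \<longlonglongrightarrow> c n * f (l n)" for n
      by (intro tendsto_mult_left isCont_tendsto_compose[OF f lim])
  qed simp
qed

lemma log_term_eq: "log_term q r c u = (\<lambda>n. c n * lnpowq (u n))"
  by (auto simp: log_term_def lnpowq_def)

lemma power_summable: "u \<in> E \<Longrightarrow> (\<lambda>n. c n * powq (u n)) summable_on UNIV"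
  by (rule weighted_summable[OF isCont_powq abs_le_normp])

lemma log_summable: "u \<in> E \<Longrightarrow> log_term q r c u summable_on UNIV"
  unfolding log_term_eq by (rule weighted_summable[OF isCont_lnpowq abs_le_normp])

lemma spaceE_subset_spaceD: "u \<in> E \<Longrightarrow> u \<in> spaceD p q r a b c"
  by (simp add: spaceD_def log_summable)

lemma power_sum_nonneg: "0 \<le> power_sum u"
  unfolding power_sum_def by (rule infsum_nonneg) (simp add: c_nonneg powq_def)

lemma power_sum_pos: "u \<in> E \<Longrightarrow> u \<noteq> (\<lambda>n. 0) \<Longrightarrow> 0 < power_sum u"
proof -
  assume u: "u \<in> E" "u \<noteq> (\<lambda>n. 0)"
  then obtain n where n: "u n \<noteq> 0" by auto
  have "0 < c n * powq (u n)" using c_pos[of n] n by (simp add: powq_def)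
  also have "\<dots> \<le> power_sum u" unfolding power_sum_def
    using sum_le_infsum_nonneg[OF power_summable[OF u(1)], of "{n}"] by (simp add: c_nonneg powq_def)
  finally show ?thesis .
qed

lemma energy_eq: "I u = nrm u / p + r / q\<^sup>2 * power_sum u - log_sum u / q"
  by (simp add: energyI_def power_sum_def powq_def log_sum_def)

lemma dI_self: "I' u u = nrm u - log_sum u"
proof -
  have "a n * phi p (fdiff u n) * fdiff u n + b n * phi p (u n) * u n = nt u n" for n
    by (simp add: norm_term_def mult.assoc phi_mult_self)
  moreover have "(if u n = 0 then 0 else c n * phi q (u n) * u n * ln (\<bar>u n\<bar> powr r)) = log_term q r c u n" for n
    by (simp add: log_term_def mult.assoc phi_mult_self)
  ultimately show ?thesis by (simp add: dI_def normp_def log_sum_def)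
qed

lemma fdiff_scale: "fdiff (\<lambda>n. t * u n) n = t * fdiff u n"
  by (simp add: fdiff_def algebra_simps)

lemma norm_term_scale: "nt (\<lambda>n. t * u n) n = t ^ m * nt u n"
  by (simp add: norm_term_eq fdiff_scale power_mult_distrib algebra_simps)

lemma normp_scale: "nrm (\<lambda>n. t * u n) = t ^ m * nrm u"
  unfolding normp_def norm_term_scale by (rule infsum_cmult_right')

lemma spaceE_scale: "u \<in> E \<Longrightarrow> (\<lambda>n. t * u n) \<in> E"
  unfolding spaceE_def mem_Collect_eq norm_term_scale by (rule summable_on_cmult_right)

lemma power_sum_scale: "power_sum (\<lambda>n. t * u n) = \<bar>t\<bar> powr q * power_sum u"
proof -
  have "(\<lambda>n. c n * powq (t * u n)) = (\<lambda>n. \<bar>t\<bar> powr q * (c n * powq (u n)))"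
    by (simp add: powq_def abs_mult powr_mult mult_ac)
  then show ?thesis unfolding power_sum_def by (simp add: infsum_cmult_right')
qed

lemma lnpowq_scale: "0 < t \<Longrightarrow> lnpowq (t * x) = t powr q * (lnpowq x + r * ln t * powq x)"
proof (cases "x = 0")
  case False
  assume t: "0 < t"
  have "lnpowq (t * x) = (t * \<bar>x\<bar>) powr q * (r * ln (t * \<bar>x\<bar>))"
    using t by (simp add: lnpowq_def abs_mult)
  also have "\<dots> = t powr q * (\<bar>x\<bar> powr q * (r * ln \<bar>x\<bar>) + r * ln t * \<bar>x\<bar> powr q)"
    using t False by (simp add: powr_mult ln_mult algebra_simps)
  also have "\<dots> = t powr q * (lnpowq x + r * ln t * powq x)"
    by (simp add: lnpowq_def powq_def)
  finally show ?thesis .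
qed (simp add: lnpowq_def powq_def)

lemma log_sum_scale:
  assumes u: "u \<in> E" and t: "0 < t"
  shows "log_sum (\<lambda>n. t * u n) = t powr q * (log_sum u + r * ln t * power_sum u)"
proof -
  have s1: "(\<lambda>n. c n * lnpowq (u n)) summable_on UNIV" using log_summable[OF u] by (simp add: log_term_eq)
  have s2: "(\<lambda>n. r * ln t * (c n * powq (u n))) summable_on UNIV"
    by (rule summable_on_cmult_right[OF power_summable[OF u]])
  have "log_sum (\<lambda>n. t * u n) = (\<Sum>\<^sub>\<infinity>n. t powr q * (c n * lnpowq (u n) + r * ln t * (c n * powq (u n))))"
    unfolding log_sum_def log_term_eq lnpowq_scale[OF t] by (simp only: ring_distribs mult_ac)
  also have "\<dots> = t powr q * (log_sum u + r * ln t * power_sum u)"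
    unfolding infsum_cmult_right' infsum_add[OF s1 s2] log_sum_def log_term_eq power_sum_def ..
  finally show ?thesis .
qed

lemma energy_scale:
  assumes "u \<in> E" "0 < t"
  shows "I (\<lambda>n. t * u n) = t powr p * nrm u / p + r / q\<^sup>2 * (t powr q * power_sum u)
      - t powr q * (log_sum u + r * ln t * power_sum u) / q"
  using assms by (simp add: energy_eq normp_scale power_sum_scale log_sum_scale powr_p)

lemma dI_scale_self:
  assumes "u \<in> E" "0 < t"
  shows "I' (\<lambda>n. t * u n) (\<lambda>n. t * u n) = t powr p * nrm u - t powr q * (log_sum u + r * ln t * power_sum u)"
  using assms by (simp add: dI_self normp_scale log_sum_scale powr_p)

section \<open>The Nehari manifold and the fibering maps\<close>

lemma nehari_iff: "u \<in> E \<Longrightarrow> u \<in> Nehari \<longleftrightarrow> u \<noteq> (\<lambda>n. 0) \<and> nrm u = log_sum u"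
  using spaceE_subset_spaceD by (auto simp: nehari_def dI_self)

lemma nehari_subset_spaceE: "u \<in> Nehari \<Longrightarrow> u \<in> E"
  by (simp add: nehari_def spaceD_def)

lemma energy_nehari: "u \<in> Nehari \<Longrightarrow> I u = reduced_energy u"
  using nehari_iff[OF nehari_subset_spaceE] by (simp add: energy_eq reduced_energy_def algebra_simps)

lemma lnpowq_nonpos: "\<bar>x\<bar> \<le> 1 \<Longrightarrow> lnpowq x \<le> 0"
proof (cases "x = 0")
  case False
  assume x: "\<bar>x\<bar> \<le> 1"
  have "ln \<bar>x\<bar> \<le> 0" using False x by simp
  then show ?thesis using r_ge by (simp add: lnpowq_def mult_nonneg_nonpos)
qed (simp add: lnpowq_def)

text \<open>On the Nehari manifold \<open>log_sum u = nrm u > 0\<close>, which is impossible if \<open>\<bar>u\<bar> \<le> 1\<close>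
  everywhere; a single entry \<open>\<bar>u n\<bar> > 1\<close> already costs \<open>b0\<close> in the norm.\<close>

lemma normp_nehari_ge: "u \<in> Nehari \<Longrightarrow> b0 \<le> nrm u"
proof -
  assume u: "u \<in> Nehari"
  have uE: "u \<in> E" using nehari_subset_spaceE[OF u] .
  have "\<exists>n. 1 < \<bar>u n\<bar>"
  proof (rule ccontr)
    assume "\<nexists>n. 1 < \<bar>u n\<bar>"
    then have "log_sum u \<le> 0" unfolding log_sum_def
      by (intro infsum_le_finite_sums[OF log_summable[OF uE]] sum_nonpos)
         (simp add: log_term_eq c_nonneg lnpowq_nonpos mult_nonneg_nonpos not_less)
    then show False using normp_pos[OF uE] nehari_iff[OF uE] u by simp
  qed
  then obtain n where "1 < \<bar>u n\<bar>" by blast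
  then have "1 \<le> \<bar>u n\<bar> ^ m" by (simp add: one_le_power)
  then have "1 \<le> (u n) ^ m" using m_even by (simp add: power_even_abs)
  then have "b0 * 1 \<le> b0 * (u n) ^ m" using b0_pos by (intro mult_left_mono) auto
  then show ?thesis using power_le_normp[OF uE, of n] by linarith
qed

lemma energy_nehari_ge: "u \<in> Nehari \<Longrightarrow> (1/p - 1/q) * b0 \<le> I u"
proof -
  assume u: "u \<in> Nehari"
  have "(1/p - 1/q) * b0 \<le> (1/p - 1/q) * nrm u"
    using normp_nehari_ge[OF u] reduced_coeff_pos by (intro mult_left_mono) auto
  also have "\<dots> \<le> reduced_energy u" using power_sum_nonneg r_ge by (simp add: reduced_energy_def)
  finally show ?thesis using energy_nehari[OF u] by simp
qed

text \<open>The fibering equation: \<open>t * u \<in> Nehari\<close> iff \<open>t\<close> solves it with \<open>N = nrm u\<close>,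
  \<open>L = log_sum u\<close> and \<open>P = power_sum u\<close>.\<close>

lemma fibering_root:
  assumes N: "0 < N" and P: "0 < P" and T: "0 < T"
    and above: "T powr p * N \<le> T powr q * (L + r * ln T * P)"
  shows "\<exists>t. 0 < t \<and> t \<le> T \<and> t powr p * N = t powr q * (L + r * ln t * P)"
proof -
  define G where "G t = t powr p * N - t powr q * (L + r * ln t * P)" for t
  define e where "e = min T (exp (- (\<bar>L\<bar> + 1) / (r * P)))"
  have rP: "0 < r * P" using r_ge P by simp
  have e: "0 < e" "e \<le> T" using T by (auto simp: e_def)
  have "ln e \<le> ln (exp (- (\<bar>L\<bar> + 1) / (r * P)))"
    using e(1) by (subst ln_le_cancel_iff) (auto simp: e_def)
  then have "ln e \<le> - (\<bar>L\<bar> + 1) / (r * P)" by simp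
  then have "r * ln e * P \<le> - (\<bar>L\<bar> + 1)" using rP by (simp add: field_simps)
  then have "e powr q * (L + r * ln e * P) \<le> 0"
    by (intro mult_nonneg_nonpos) auto
  moreover have "0 \<le> e powr p * N" using N by simp
  ultimately have "0 \<le> G e" by (simp add: G_def)
  moreover have "G T \<le> 0" using above by (simp add: G_def)
  moreover have "continuous_on {e..T} G"
    unfolding G_def using e by (intro continuous_intros) auto
  ultimately obtain t where "e \<le> t" "t \<le> T" "G t = 0"
    using IVT2'[of G T 0 e] e(2) by auto
  then show ?thesis using e by (intro exI[of _ t]) (auto simp: G_def)
qed

lemma scale_mem_nehari:
  assumes u: "u \<in> E" "u \<noteq> (\<lambda>n. 0)" and t: "0 < t"
    and eq: "t powr p * nrm u = t powr q * (log_sum u + r * ln t * power_sum u)"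
  shows "(\<lambda>n. t * u n) \<in> Nehari"
proof -
  have "(\<lambda>n. t * u n) \<noteq> (\<lambda>n. 0)" using u(2) t by (auto simp: fun_eq_iff)
  moreover have "nrm (\<lambda>n. t * u n) - log_sum (\<lambda>n. t * u n) = 0"
    using dI_self[of "\<lambda>n. t * u n"] dI_scale_self[OF u(1) t] eq by simp
  ultimately show ?thesis using nehari_iff[OF spaceE_scale[OF u(1)]] by simp
qed

lemma nehari_rescale:
  assumes u: "u \<in> E" "u \<noteq> (\<lambda>n. 0)" and le: "nrm u \<le> log_sum u"
  obtains t where "0 < t" "t \<le> 1" "(\<lambda>n. t * u n) \<in> Nehari" "I (\<lambda>n. t * u n) \<le> reduced_energy u"
proof -
  obtain t where t: "0 < t" "t \<le> 1"
    and eq: "t powr p * nrm u = t powr q * (log_sum u + r * ln t * power_sum u)"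
    using fibering_root[OF normp_pos[OF u] power_sum_pos[OF u], of 1] le by auto
  have "(\<lambda>n. t * u n) \<in> Nehari" by (rule scale_mem_nehari[OF u t(1) eq])
  moreover have "I (\<lambda>n. t * u n) = t powr p * nrm u / p + r / q\<^sup>2 * (t powr q * power_sum u) - t powr p * nrm u / q"
    using energy_scale[OF u(1) t(1)] by (simp only: eq)
  moreover have "\<dots> = (1/p - 1/q) * (t powr p * nrm u) + r / q\<^sup>2 * (t powr q * power_sum u)"
    by (simp add: left_diff_distrib)
  moreover have "\<dots> \<le> (1/p - 1/q) * (1 * nrm u) + r / q\<^sup>2 * (1 * power_sum u)"
    using t q_gt_1 p_ge_2 reduced_coeff_pos normp_nonneg power_sum_nonneg r_ge
    by (intro add_mono mult_left_mono mult_right_mono powr_le1) auto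
  ultimately show ?thesis using that t by (simp add: reduced_energy_def)
qed

lemma nehari_nonempty: "Nehari \<noteq> {}"
proof -
  define \<delta> :: "int \<Rightarrow> real" where "\<delta> n = (if n = 0 then 1 else 0)" for n
  have "nt \<delta> summable_on {-1, 0}" by simp
  then have \<delta>E: "\<delta> \<in> E" unfolding spaceE_def mem_Collect_eq
    by (rule summable_on_cong_neutral[THEN iffD1, rotated -1])
       (use m_ge in \<open>auto simp: norm_term_eq fdiff_def \<delta>_def power_0_left\<close>)
  have nz: "\<delta> \<noteq> (\<lambda>n. 0)" by (auto simp: \<delta>_def fun_eq_iff)
  define N P L where "N = nrm \<delta>" and "P = power_sum \<delta>" and "L = log_sum \<delta>"
  have N: "0 < N" and P: "0 < P" using normp_pos[OF \<delta>E nz] power_sum_pos[OF \<delta>E nz] by (simp_all add: N_def P_def)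
  define T where "T = exp (max 0 ((N - L) / (r * P)))"
  have T: "1 \<le> T" by (simp add: T_def)
  have "(N - L) / (r * P) \<le> ln T" by (simp add: T_def)
  then have "N - L \<le> r * ln T * P" using r_ge P by (simp add: field_simps)
  have "T powr p * N \<le> T powr q * N" using T N p_less_q by (intro mult_right_mono powr_mono) auto
  also have "\<dots> \<le> T powr q * (L + r * ln T * P)" using \<open>N - L \<le> r * ln T * P\<close> by (intro mult_left_mono) auto
  finally obtain t where t: "0 < t" and eq: "t powr p * N = t powr q * (L + r * ln t * P)"
    using fibering_root[OF N P, of T] T by auto
  have "(\<lambda>n. t * \<delta> n) \<in> Nehari"
    by (rule scale_mem_nehari[OF \<delta>E nz t]) (use eq in \<open>simp add: N_def P_def L_def\<close>)
  then show ?thesis by blast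
qed

lemma fiber_gap_pos:
  assumes N: "0 < N" and P: "0 < P" and t: "0 < t" "t < 1"
  shows "0 < t powr p * N - t powr q * (N + r * ln t * P)"
proof -
  have "r * ln t * P \<le> 0" using t r_ge P by (simp add: mult_nonpos_nonneg mult_nonneg_nonpos)
  then have "t powr q * (N + r * ln t * P) \<le> t powr q * N" by (intro mult_left_mono) auto
  also have "\<dots> < t powr p * N" using powr_less_mono'[OF t p_less_q] N by simp
  finally show ?thesis by simp
qed

lemma fiber_gap_neg:
  assumes N: "0 < N" and P: "0 < P" and t: "1 < t"
  shows "t powr p * N - t powr q * (N + r * ln t * P) < 0"
proof -
  have "t powr p * N < t powr q * N" using powr_less_mono[OF p_less_q t] N by simp
  also have "\<dots> \<le> t powr q * (N + r * ln t * P)" using t r_ge P by (intro mult_left_mono) auto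
  finally show ?thesis by simp
qed

text \<open>The energy along the ray through a point \<open>u\<close> of the Nehari manifold, in terms of
  \<open>N = nrm u = log_sum u\<close> and \<open>P = power_sum u\<close> (see \<open>energy_scale\<close>).\<close>

definition fiber_energy :: "real \<Rightarrow> real \<Rightarrow> real \<Rightarrow> real" where
  "fiber_energy N P t = N / p * t powr p + (r / q\<^sup>2 * P) * t powr q - 1 / q * (t powr q * (N + (r * P) * ln t))"

lemma fiber_energy_deriv:
  assumes x: "0 < x"
  shows "(fiber_energy N P has_real_derivative (x powr p * N - x powr q * (N + r * ln x * P)) / x) (at x)"
proof -
  note d1 = has_real_derivative_powr[OF x, of p] and d2 = has_real_derivative_powr[OF x, of q]
  have "(fiber_energy N P has_real_derivative
      N / p * (p * x powr (p - 1)) + (r / q\<^sup>2 * P) * (q * x powr (q - 1))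
      - 1 / q * ((q * x powr (q - 1)) * (N + (r * P) * ln x) + (0 + (r * P) * (1 / x)) * x powr q)) (at x)"
    unfolding fiber_energy_def[abs_def]
    by (rule DERIV_diff[OF DERIV_add[OF DERIV_cmult[OF d1] DERIV_cmult[OF d2]]
          DERIV_cmult[OF DERIV_mult[OF d2 DERIV_add[OF DERIV_const DERIV_cmult[OF DERIV_ln_divide[OF x]]]]]])
  moreover have "N / p * (p * x powr (p - 1)) + (r / q\<^sup>2 * P) * (q * x powr (q - 1))
      - 1 / q * ((q * x powr (q - 1)) * (N + (r * P) * ln x) + (0 + (r * P) * (1 / x)) * x powr q)
      = (x powr p * N - x powr q * (N + r * ln x * P)) / x"
  proof -
    have "x powr (p - 1) = x powr p / x" "x powr (q - 1) = x powr q / x" using x by (simp_all add: powr_diff)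
    then show ?thesis using x p_ge_2 q_gt_1 by (simp add: field_simps power2_eq_square)
  qed
  ultimately show ?thesis by simp
qed

lemma fiber_energy_le:
  assumes N: "0 < N" and P: "0 < P" and t: "0 < t"
  shows "fiber_energy N P t \<le> fiber_energy N P 1"
proof -
  have cont: "continuous_on {x..y} (fiber_energy N P)" if "0 < x" for x y
    using that by (intro continuous_at_imp_continuous_on ballI DERIV_isCont[OF fiber_energy_deriv]) auto
  show ?thesis
  proof (cases t "1::real" rule: linorder_cases)
    case less
    show ?thesis
    proof (rule DERIV_nonneg_imp_increasing_open[OF less_imp_le[OF less] _ cont[OF t]])
      fix x assume "t < x" "x < 1"
      then show "\<exists>y. (fiber_energy N P has_real_derivative y) (at x) \<and> 0 \<le> y"
        using fiber_energy_deriv[of x] fiber_gap_pos[OF N P, of x] t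
        by (intro exI[of _ "(x powr p * N - x powr q * (N + r * ln x * P)) / x"]) auto
    qed
  next
    case greater
    show ?thesis
    proof (rule DERIV_nonpos_imp_decreasing_open[OF less_imp_le[OF greater] _ cont])
      fix x assume "1 < x" "x < t"
      then show "\<exists>y. (fiber_energy N P has_real_derivative y) (at x) \<and> y \<le> 0"
        using fiber_energy_deriv[of x] fiber_gap_neg[OF N P, of x]
        by (intro exI[of _ "(x powr p * N - x powr q * (N + r * ln x * P)) / x"]) (auto simp: divide_nonpos_pos)
    qed simp
  qed simp
qed

lemma energy_scale_le:
  assumes u: "u \<in> Nehari" and t: "0 < t"
  shows "I (\<lambda>n. t * u n) \<le> I u"
proof -
  have uE: "u \<in> E" by (rule nehari_subset_spaceE[OF u])
  have nz: "u \<noteq> (\<lambda>n. 0)" and eq: "log_sum u = nrm u" using nehari_iff[OF uE] u by auto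
  have "I (\<lambda>n. t * u n) = fiber_energy (nrm u) (power_sum u) t" "I u = fiber_energy (nrm u) (power_sum u) 1"
    by (simp_all add: energy_scale[OF uE t] energy_eq eq fiber_energy_def algebra_simps add_divide_distrib)
  then show ?thesis using fiber_energy_le[OF normp_pos[OF uE nz] power_sum_pos[OF uE nz] t] by simp
qed

section \<open>Existence of a minimizer\<close>

definition nehari_level :: real where
  "nehari_level = (INF u \<in> Nehari. I u)"

lemma bdd_below_energy_nehari: "bdd_below (I ` Nehari)"
  using energy_nehari_ge by (auto simp: bdd_below_def)

lemma nehari_level_le: "u \<in> Nehari \<Longrightarrow> nehari_level \<le> I u"
  unfolding nehari_level_def by (rule cInf_lower[OF imageI bdd_below_energy_nehari])

lemma normp_le_energy_nehari: "u \<in> Nehari \<Longrightarrow> nrm u \<le> I u / (1/p - 1/q)"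
  using energy_nehari[of u] power_sum_nonneg[of u] r_ge reduced_coeff_pos
  by (simp add: reduced_energy_def field_simps)

lemma spaceE_pointwise_limit:
  assumes v: "\<And>k. v k \<in> E" and lim: "\<And>n. (\<lambda>k. v k n) \<longlonglongrightarrow> l n"
    and L: "(\<lambda>k. nrm (v k)) \<longlonglongrightarrow> L"
  shows "l \<in> E" and "nrm l \<le> L"
proof -
  have "(\<lambda>k. nt (v k) n) \<longlonglongrightarrow> nt l n" for n
    unfolding norm_term_eq fdiff_def by (intro tendsto_intros lim)
  then have fin: "sum (nt l) F \<le> L" if "finite F" for F
    by (rule LIMSEQ_le[OF tendsto_sum L])
       (use v that in \<open>auto simp: spaceE_def normp_def intro!: sum_le_infsum_nonneg norm_term_nonneg\<close>)
  show lE: "l \<in> E"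
    unfolding spaceE_def mem_Collect_eq
    by (rule nonneg_bdd_above_summable_on) (use norm_term_nonneg fin in \<open>auto simp: bdd_above_def\<close>)
  show "nrm l \<le> L"
    unfolding normp_def by (rule infsum_le_finite_sums) (use lE fin in \<open>auto simp: spaceE_def\<close>)
qed

text \<open>A pointwise limit of a minimizing sequence on the Nehari manifold is admissible for
  \<open>nehari_rescale\<close>: by dominated convergence the functionals \<open>log_sum\<close> and \<open>power_sum\<close>
  pass to the limit, while the norm can only drop.\<close>

lemma nehari_minimizing_limit:
  assumes v: "\<And>k. v k \<in> Nehari" and Ilim: "(\<lambda>k. I (v k)) \<longlonglongrightarrow> \<mu>"
    and bound: "\<And>k n. \<bar>v k n\<bar> \<le> M" and lim: "\<And>n. (\<lambda>k. v k n) \<longlonglongrightarrow> l n"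
  shows "l \<in> E" "l \<noteq> (\<lambda>n. 0)" "nrm l \<le> log_sum l" "reduced_energy l \<le> \<mu>"
proof -
  have vE: "v k \<in> E" for k using nehari_subset_spaceE[OF v] .
  have Plim: "(\<lambda>k. power_sum (v k)) \<longlonglongrightarrow> power_sum l"
    unfolding power_sum_def by (rule weighted_sum_tendsto[OF isCont_powq bound lim])
  have "(\<lambda>k. log_sum (v k)) \<longlonglongrightarrow> log_sum l"
    unfolding log_sum_def log_term_eq by (rule weighted_sum_tendsto[OF isCont_lnpowq bound lim])
  moreover have "nrm (v k) = log_sum (v k)" for k using nehari_iff[OF vE] v by auto
  ultimately have Nlim: "(\<lambda>k. nrm (v k)) \<longlonglongrightarrow> log_sum l" by simp
  show "l \<in> E" "nrm l \<le> log_sum l" using spaceE_pointwise_limit[OF vE lim Nlim] by auto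
  have "b0 \<le> log_sum l" by (rule LIMSEQ_le_const[OF Nlim]) (use normp_nehari_ge v in auto)
  moreover have "log_sum (\<lambda>n. 0) = 0" by (simp add: log_sum_def log_term_def)
  ultimately show "l \<noteq> (\<lambda>n. 0)" using b0_pos by auto
  have "(\<lambda>k. I (v k)) \<longlonglongrightarrow> (1/p - 1/q) * log_sum l + r / q\<^sup>2 * power_sum l"
    unfolding energy_nehari[OF v] reduced_energy_def by (intro tendsto_intros Nlim Plim)
  then have "\<mu> = (1/p - 1/q) * log_sum l + r / q\<^sup>2 * power_sum l" using LIMSEQ_unique[OF Ilim] by blast
  then show "reduced_energy l \<le> \<mu>"
    unfolding reduced_energy_def using \<open>nrm l \<le> log_sum l\<close> reduced_coeff_pos by simp
qed

lemma exists_nehari_minimizer: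
  obtains u where "u \<in> Nehari" "I u = nehari_level"
proof -
  obtain v where v: "\<And>k. v k \<in> Nehari" and Ilim: "(\<lambda>k. I (v k)) \<longlonglongrightarrow> nehari_level"
    using exists_minimizing_sequence[OF nehari_nonempty bdd_below_energy_nehari, folded nehari_level_def]
    by blast
  obtain B where B: "\<And>k. \<bar>I (v k)\<bar> \<le> B"
  proof (rule BseqE[OF convergent_imp_Bseq[OF convergentI[OF Ilim]]])
    fix K assume "\<forall>k. norm (I (v k)) \<le> K"
    then show thesis by (intro that[of K]) simp
  qed
  define M where "M = max 1 (B / (1/p - 1/q) / b0)"
  have vbound: "\<bar>v k n\<bar> \<le> M" for k n
  proof -
    have "I (v k) / (1/p - 1/q) \<le> B / (1/p - 1/q)"
      using B[of k] reduced_coeff_pos by (intro divide_right_mono) auto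
    then have "nrm (v k) / b0 \<le> B / (1/p - 1/q) / b0"
      using normp_le_energy_nehari[OF v, of k] b0_pos by (intro divide_right_mono) auto
    then have "max 1 (nrm (v k) / b0) \<le> M" unfolding M_def by (intro max.mono) auto
    then show ?thesis using abs_le_normp[OF nehari_subset_spaceE[OF v], of k n] by linarith
  qed
  obtain \<sigma> l where \<sigma>: "strict_mono \<sigma>" and lim: "\<And>n. (\<lambda>k. v (\<sigma> k) n) \<longlonglongrightarrow> l n"
    using bounded_functions_pointwise_convergent_subseq[of v M, OF vbound] by blast
  have "(\<lambda>k. I (v (\<sigma> k))) \<longlonglongrightarrow> nehari_level"
    using LIMSEQ_subseq_LIMSEQ[OF Ilim \<sigma>] by (simp add: o_def)
  note l = nehari_minimizing_limit[of "\<lambda>k. v (\<sigma> k)", OF v this vbound lim]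
  obtain t where t: "(\<lambda>n. t * l n) \<in> Nehari" "I (\<lambda>n. t * l n) \<le> reduced_energy l"
    by (rule nehari_rescale[OF l(1-3)])
  show ?thesis
    by (rule that[OF t(1)]) (use nehari_level_le[OF t(1)] t(2) l(4) in linarith)
qed

section \<open>The minimizer is a critical point\<close>

definition plap_term :: "(int \<Rightarrow> real) \<Rightarrow> (int \<Rightarrow> real) \<Rightarrow> int \<Rightarrow> real" where
  "plap_term u v n = a n * phi p (fdiff u n) * fdiff v n + b n * phi p (u n) * v n"

lemma fdiff_add_scale: "fdiff (\<lambda>n. u n + s * v n) n = fdiff u n + s * fdiff v n"
  by (simp add: fdiff_def algebra_simps)

lemma even_power_add_le: "(x + y) ^ m \<le> 2 ^ m * (x ^ m + (y :: real) ^ m)"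
proof -
  have "(x + y) ^ m = \<bar>x + y\<bar> ^ m" using m_even by (simp add: power_even_abs)
  also have "\<dots> \<le> (\<bar>x\<bar> + \<bar>y\<bar>) ^ m" by (intro power_mono abs_triangle_ineq) auto
  also have "\<dots> \<le> 2 ^ m * (\<bar>x\<bar> ^ m + \<bar>y\<bar> ^ m)" by (rule power_abs_add_le)
  finally show ?thesis using m_even by (simp add: power_even_abs)
qed

lemma norm_term_add_le: "nt (\<lambda>n. u n + s * v n) n \<le> 2 ^ m * (nt u n + s ^ m * nt v n)"
proof -
  have "a n * (fdiff u n + s * fdiff v n) ^ m \<le> a n * (2 ^ m * ((fdiff u n) ^ m + (s * fdiff v n) ^ m))"
    and "b n * (u n + s * v n) ^ m \<le> b n * (2 ^ m * ((u n) ^ m + (s * v n) ^ m))"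
    using a_pos[of n] b_pos[of n] by (intro mult_left_mono even_power_add_le; simp)+
  then show ?thesis
    by (simp add: norm_term_eq fdiff_add_scale power_mult_distrib algebra_simps)
qed

lemma spaceE_add_scale: "u \<in> E \<Longrightarrow> v \<in> E \<Longrightarrow> (\<lambda>n. u n + s * v n) \<in> E"
  unfolding spaceE_def mem_Collect_eq
  by (rule summable_on_real_comparison[where g = "\<lambda>n. 2 ^ m * (nt u n + s ^ m * nt v n)"])
     (auto intro!: summable_on_cmult_right summable_on_add norm_term_add_le simp: norm_term_nonneg)

lemma norm_term_difference_quotient:
  "(nt (\<lambda>n. u n + s * v n) n - nt u n) / s
    = a n * (((fdiff u n + s * fdiff v n) ^ m - (fdiff u n) ^ m) / s)
      + b n * (((u n + s * v n) ^ m - (u n) ^ m) / s)"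
  by (simp add: norm_term_eq fdiff_add_scale diff_divide_distrib add_divide_distrib algebra_simps)

lemma norm_term_difference_quotient_le:
  assumes "s \<noteq> 0" "\<bar>s\<bar> \<le> 1"
  shows "\<bar>(nt (\<lambda>n. u n + s * v n) n - nt u n) / s\<bar> \<le> real m * 2 ^ m * (nt u n + nt v n)"
proof -
  have even_abs: "\<bar>x\<bar> ^ m = x ^ m" for x :: real using m_even by (simp add: power_even_abs)
  have bound: "\<bar>((x + s * y) ^ m - x ^ m) / s\<bar> \<le> real m * 2 ^ m * (x ^ m + y ^ m)" for x y
    using power_difference_quotient_le[OF assms, of m x y] m_ge by (simp add: even_abs)
  have "\<bar>(nt (\<lambda>n. u n + s * v n) n - nt u n) / s\<bar>
      \<le> a n * \<bar>((fdiff u n + s * fdiff v n) ^ m - (fdiff u n) ^ m) / s\<bar>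
        + b n * \<bar>((u n + s * v n) ^ m - (u n) ^ m) / s\<bar>"
    unfolding norm_term_difference_quotient using a_pos[of n] b_pos[of n]
    by (metis (no_types, lifting) abs_mult abs_of_pos abs_triangle_ineq)
  also have "\<dots> \<le> a n * (real m * 2 ^ m * ((fdiff u n) ^ m + (fdiff v n) ^ m))
      + b n * (real m * 2 ^ m * ((u n) ^ m + (v n) ^ m))"
    using a_pos[of n] b_pos[of n] bound by (intro add_mono mult_left_mono) auto
  also have "\<dots> = real m * 2 ^ m * (nt u n + nt v n)" by (simp add: norm_term_eq algebra_simps)
  finally show ?thesis .
qed

lemma norm_term_difference_quotient_tendsto:
  "((\<lambda>s. (nt (\<lambda>n. u n + s * v n) n - nt u n) / s) \<longlongrightarrow> p * plap_term u v n) (at 0)"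
proof -
  have "((\<lambda>x::real. x ^ m) has_real_derivative real m * x ^ (m - 1)) (at x)" for x
    by (auto intro!: derivative_eq_intros)
  then have "((\<lambda>s. (nt (\<lambda>n. u n + s * v n) n - nt u n) / s) \<longlongrightarrow>
      a n * (real m * (fdiff u n) ^ (m - 1) * fdiff v n) + b n * (real m * (u n) ^ (m - 1) * v n)) (at 0)"
    unfolding norm_term_difference_quotient by (intro tendsto_add tendsto_mult_left difference_quotient_tendsto)
  then show ?thesis by (simp add: plap_term_def phi_p algebra_simps flip: p_eq)
qed

lemma normp_directional_derivative:
  assumes u: "u \<in> E" and v: "v \<in> E"
  shows "plap_term u v summable_on UNIV"
    and "((\<lambda>s. (nrm (\<lambda>n. u n + s * v n) - nrm u) / s) \<longlongrightarrow> p * (\<Sum>\<^sub>\<infinity>n. plap_term u v n)) (at 0)"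
proof -
  have dom: "\<forall>\<^sub>F s in at 0. \<forall>n. \<bar>(nt (\<lambda>n. u n + s * v n) n - nt u n) / s\<bar> \<le> real m * 2 ^ m * (nt u n + nt v n)"
    using eventually_at_0_small by eventually_elim (intro allI norm_term_difference_quotient_le; simp)
  have g: "(\<lambda>n. real m * 2 ^ m * (nt u n + nt v n)) summable_on UNIV"
    using u v by (intro summable_on_cmult_right summable_on_add) (auto simp: spaceE_def)
  note DC = infsum_dominated_convergence[OF g dom norm_term_difference_quotient_tendsto at_neq_bot]
  have p0: "p \<noteq> 0" using p_ge_2 by simp
  show "plap_term u v summable_on UNIV"
    using summable_on_cmult_right[OF DC(1), of "1 / p"] p0 by simp
  have "\<forall>\<^sub>F s in at 0. (\<Sum>\<^sub>\<infinity>n. (nt (\<lambda>n. u n + s * v n) n - nt u n) / s) = (nrm (\<lambda>n. u n + s * v n) - nrm u) / s"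
    using u spaceE_add_scale[OF u v]
    by (auto simp: divide_inverse infsum_cmult_left' infsum_diff normp_def spaceE_def)
  then show "((\<lambda>s. (nrm (\<lambda>n. u n + s * v n) - nrm u) / s) \<longlongrightarrow> p * (\<Sum>\<^sub>\<infinity>n. plap_term u v n)) (at 0)"
    using tendsto_cong DC(2) by (fastforce simp: infsum_cmult_right')
qed

lemma spaceE_common_bound:
  assumes "u \<in> E" "v \<in> E"
  shows "\<exists>M. (\<forall>n. \<bar>u n\<bar> \<le> M) \<and> (\<forall>n. \<bar>v n\<bar> \<le> M)"
  using abs_le_normp[OF assms(1)] abs_le_normp[OF assms(2)]
  by (intro exI[of _ "max (max 1 (nrm u / b0)) (max 1 (nrm v / b0))"]) (auto simp: le_max_iff_disj)

lemma power_sum_directional_derivative: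
  assumes u: "u \<in> E" and v: "v \<in> E"
  shows "(\<lambda>n. c n * (q * phi q (u n)) * v n) summable_on UNIV"
    and "((\<lambda>s. (power_sum (\<lambda>n. u n + s * v n) - power_sum u) / s)
          \<longlongrightarrow> (\<Sum>\<^sub>\<infinity>n. c n * (q * phi q (u n)) * v n)) (at 0)"
proof -
  obtain M where "\<And>n. \<bar>u n\<bar> \<le> M" "\<And>n. \<bar>v n\<bar> \<le> M" using spaceE_common_bound[OF u v] by blast
  note D = infsum_directional_derivative[OF powq_deriv powq_deriv_bound this c_summable c_nonneg]
  show "(\<lambda>n. c n * (q * phi q (u n)) * v n) summable_on UNIV" by (rule D(1))
  show "((\<lambda>s. (power_sum (\<lambda>n. u n + s * v n) - power_sum u) / s)
          \<longlongrightarrow> (\<Sum>\<^sub>\<infinity>n. c n * (q * phi q (u n)) * v n)) (at 0)"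
    using D(2) by (simp add: power_sum_def)
qed

lemma log_sum_directional_derivative:
  assumes u: "u \<in> E" and v: "v \<in> E"
  shows "(\<lambda>n. c n * ((q * ln (\<bar>u n\<bar> powr r) + r) * phi q (u n)) * v n) summable_on UNIV"
    and "((\<lambda>s. (log_sum (\<lambda>n. u n + s * v n) - log_sum u) / s)
          \<longlongrightarrow> (\<Sum>\<^sub>\<infinity>n. c n * ((q * ln (\<bar>u n\<bar> powr r) + r) * phi q (u n)) * v n)) (at 0)"
proof -
  obtain M where "\<And>n. \<bar>u n\<bar> \<le> M" "\<And>n. \<bar>v n\<bar> \<le> M" using spaceE_common_bound[OF u v] by blast
  note D = infsum_directional_derivative[OF lnpowq_deriv lnpowq_deriv_bound this c_summable c_nonneg]
  show "(\<lambda>n. c n * ((q * ln (\<bar>u n\<bar> powr r) + r) * phi q (u n)) * v n) summable_on UNIV" by (rule D(1))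
  show "((\<lambda>s. (log_sum (\<lambda>n. u n + s * v n) - log_sum u) / s)
          \<longlongrightarrow> (\<Sum>\<^sub>\<infinity>n. c n * ((q * ln (\<bar>u n\<bar> powr r) + r) * phi q (u n)) * v n)) (at 0)"
    using D(2) by (simp add: log_sum_def log_term_eq)
qed

lemma dI_eq_directional_derivatives:
  assumes u: "u \<in> E" and v: "v \<in> E"
  shows "p * (\<Sum>\<^sub>\<infinity>n. plap_term u v n) / p
      + r / q\<^sup>2 * (\<Sum>\<^sub>\<infinity>n. c n * (q * phi q (u n)) * v n)
      - (\<Sum>\<^sub>\<infinity>n. c n * ((q * ln (\<bar>u n\<bar> powr r) + r) * phi q (u n)) * v n) / q = I' u v"
proof -
  define P where "P n = c n * phi q (u n) * v n" for n
  define S where "S n = c n * phi q (u n) * v n * ln (\<bar>u n\<bar> powr r)" for n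
  have q0: "q \<noteq> 0" and p0: "p \<noteq> 0" using q_gt_1 p_ge_2 by auto
  have eP: "(\<lambda>n. c n * (q * phi q (u n)) * v n) = (\<lambda>n. q * P n)" by (auto simp: P_def)
  have eS: "(\<lambda>n. c n * ((q * ln (\<bar>u n\<bar> powr r) + r) * phi q (u n)) * v n) = (\<lambda>n. q * S n + r * P n)"
    by (auto simp: P_def S_def algebra_simps)
  have Ps: "P summable_on UNIV"
  proof -
    have "(\<lambda>n. (1 / q) * (q * P n)) summable_on UNIV"
      using power_sum_directional_derivative(1)[OF u v] unfolding eP by (rule summable_on_cmult_right)
    then show ?thesis using q0 by simp
  qed
  have Ss: "S summable_on UNIV"
  proof -
    have "(\<lambda>n. (1 / q) * ((q * S n + r * P n) - r * P n)) summable_on UNIV"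
      using log_sum_directional_derivative(1)[OF u v] Ps unfolding eS
      by (intro summable_on_cmult_right summable_on_diff summable_on_cmult_right)
    then show ?thesis using q0 by simp
  qed
  have "(\<lambda>n. if u n = 0 then 0 else c n * phi q (u n) * v n * ln (\<bar>u n\<bar> powr r)) = S"
    by (auto simp: S_def phi_def)
  then have dI_eq: "I' u v = (\<Sum>\<^sub>\<infinity>n. plap_term u v n) - (\<Sum>\<^sub>\<infinity>n. S n)"
    by (simp add: dI_def plap_term_def[abs_def])
  have sum_eq: "(\<Sum>\<^sub>\<infinity>n. q * S n + r * P n) = q * (\<Sum>\<^sub>\<infinity>n. S n) + r * (\<Sum>\<^sub>\<infinity>n. P n)"
    using infsum_add[OF summable_on_cmult_right[OF Ss] summable_on_cmult_right[OF Ps]]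
    by (simp add: infsum_cmult_right')
  show ?thesis unfolding eP eS sum_eq dI_eq using q0 p0
    by (simp add: infsum_cmult_right' field_simps power2_eq_square)
qed

lemma energy_ray_difference_quotient_eq:
  assumes u: "u \<in> E" and v: "v \<in> E" and s: "s \<noteq> 0" and t: "0 < t"
  defines "\<alpha> \<equiv> (nrm (\<lambda>n. u n + s * v n) - nrm u) / s"
    and "\<beta> \<equiv> (power_sum (\<lambda>n. u n + s * v n) - power_sum u) / s"
    and "\<gamma> \<equiv> (log_sum (\<lambda>n. u n + s * v n) - log_sum u) / s"
  shows "(I (\<lambda>n. t * (u n + s * v n)) - I (\<lambda>n. t * u n)) / s
    = t powr p / p * \<alpha> + r / q\<^sup>2 * (t powr q * \<beta>) - t powr q * (\<gamma> + r * ln t * \<beta>) / q"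
proof -
  have p0: "p \<noteq> 0" and q0: "q \<noteq> 0" using p_ge_2 q_gt_1 by auto
  have "s * (t powr p / p * \<alpha> + r / q\<^sup>2 * (t powr q * \<beta>) - t powr q * (\<gamma> + r * ln t * \<beta>) / q)
      = t powr p / p * (s * \<alpha>) + r / q\<^sup>2 * (t powr q * (s * \<beta>)) - t powr q * (s * \<gamma> + r * ln t * (s * \<beta>)) / q"
    using s p0 q0 by (simp add: field_simps)
  also have "\<dots> = I (\<lambda>n. t * (u n + s * v n)) - I (\<lambda>n. t * u n)"
    unfolding energy_scale[OF spaceE_add_scale[OF u v] t] energy_scale[OF u t]
    using s p0 q0 by (simp add: \<alpha>_def \<beta>_def \<gamma>_def field_simps)
  finally show ?thesis using s by (simp add: field_simps)
qed

lemma energy_ray_difference_quotient: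
  assumes u: "u \<in> E" and v: "v \<in> E"
  shows "((\<lambda>x. (I (\<lambda>n. snd x * (u n + fst x * v n)) - I (\<lambda>n. snd x * u n)) / fst x)
          \<longlongrightarrow> I' u v) (at 0 \<times>\<^sub>F nhds 1)"
proof -
  define \<alpha> where "\<alpha> s = (nrm (\<lambda>n. u n + s * v n) - nrm u) / s" for s
  define \<beta> where "\<beta> s = (power_sum (\<lambda>n. u n + s * v n) - power_sum u) / s" for s
  define \<gamma> where "\<gamma> s = (log_sum (\<lambda>n. u n + s * v n) - log_sum u) / s" for s
  define Q where "Q s t = t powr p / p * \<alpha> s + r / q\<^sup>2 * (t powr q * \<beta> s)
      - t powr q * (\<gamma> s + r * ln t * \<beta> s) / q" for s t
  have t_pos: "\<forall>\<^sub>F t in nhds (1::real). 0 < t" using eventually_nhds_in_open[of "{0<..}" "1::real"] by simp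
  have "\<forall>\<^sub>F x in at (0::real) \<times>\<^sub>F nhds (1::real). fst x \<noteq> 0 \<and> 0 < snd x"
    using eventually_prodI[OF eventually_at_0_small t_pos] by (rule eventually_mono) auto
  then have "\<forall>\<^sub>F x in at 0 \<times>\<^sub>F nhds 1. Q (fst x) (snd x)
      = (I (\<lambda>n. snd x * (u n + fst x * v n)) - I (\<lambda>n. snd x * u n)) / fst x"
    by (rule eventually_mono) (simp add: energy_ray_difference_quotient_eq[OF u v] Q_def \<alpha>_def \<beta>_def \<gamma>_def)
  moreover have "((\<lambda>x. Q (fst x) (snd x)) \<longlongrightarrow> I' u v) (at 0 \<times>\<^sub>F nhds 1)"
  proof -
    have fst: "((\<lambda>x. f (fst x)) \<longlongrightarrow> L) (at 0 \<times>\<^sub>F nhds 1)" if "(f \<longlongrightarrow> L) (at 0)" for f :: "real \<Rightarrow> real" and L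
      using filterlim_compose[OF that filterlim_fst] .
    have snd: "(snd \<longlongrightarrow> 1) (at (0::real) \<times>\<^sub>F nhds (1::real))" by (rule filterlim_snd)
    have "((\<lambda>x. Q (fst x) (snd x)) \<longlongrightarrow> 1 powr p / p * (p * (\<Sum>\<^sub>\<infinity>n. plap_term u v n))
        + r / q\<^sup>2 * (1 powr q * (\<Sum>\<^sub>\<infinity>n. c n * (q * phi q (u n)) * v n))
        - 1 powr q * ((\<Sum>\<^sub>\<infinity>n. c n * ((q * ln (\<bar>u n\<bar> powr r) + r) * phi q (u n)) * v n)
          + r * ln 1 * (\<Sum>\<^sub>\<infinity>n. c n * (q * phi q (u n)) * v n)) / q) (at 0 \<times>\<^sub>F nhds 1)"
      unfolding Q_def \<alpha>_def \<beta>_def \<gamma>_def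
      by (intro tendsto_intros snd fst normp_directional_derivative(2)[OF u v]
          power_sum_directional_derivative(2)[OF u v] log_sum_directional_derivative(2)[OF u v])
         (use p_ge_2 q_gt_1 in auto)
    then show ?thesis using dI_eq_directional_derivatives[OF u v] by simp
  qed
  ultimately show ?thesis by (rule Lim_transform_eventually[rotated])
qed

lemma tendsto_functionals_along_line:
  assumes u: "u \<in> E" and v: "v \<in> E"
  shows "((\<lambda>s. nrm (\<lambda>n. u n + s * v n)) \<longlongrightarrow> nrm u) (at 0)"
    and "((\<lambda>s. power_sum (\<lambda>n. u n + s * v n)) \<longlongrightarrow> power_sum u) (at 0)"
    and "((\<lambda>s. log_sum (\<lambda>n. u n + s * v n)) \<longlongrightarrow> log_sum u) (at 0)"
proof -
  have "((\<lambda>s. nrm (\<lambda>n. u n + s * v n)) \<longlongrightarrow> nrm (\<lambda>n. u n + 0 * v n)) (at 0)"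
    by (rule tendsto_of_difference_quotient) (use normp_directional_derivative(2)[OF u v] in simp)
  then show "((\<lambda>s. nrm (\<lambda>n. u n + s * v n)) \<longlongrightarrow> nrm u) (at 0)" by simp
  have "((\<lambda>s. power_sum (\<lambda>n. u n + s * v n)) \<longlongrightarrow> power_sum (\<lambda>n. u n + 0 * v n)) (at 0)"
    by (rule tendsto_of_difference_quotient) (use power_sum_directional_derivative(2)[OF u v] in simp)
  then show "((\<lambda>s. power_sum (\<lambda>n. u n + s * v n)) \<longlongrightarrow> power_sum u) (at 0)" by simp
  have "((\<lambda>s. log_sum (\<lambda>n. u n + s * v n)) \<longlongrightarrow> log_sum (\<lambda>n. u n + 0 * v n)) (at 0)"
    by (rule tendsto_of_difference_quotient) (use log_sum_directional_derivative(2)[OF u v] in simp)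
  then show "((\<lambda>s. log_sum (\<lambda>n. u n + s * v n)) \<longlongrightarrow> log_sum u) (at 0)" by simp
qed

text \<open>The fibering equation of \<open>u\<close> changes sign at \<open>1 \<plusminus> \<delta>\<close>, hence so does that of \<open>u + s * v\<close>
  for small \<open>s\<close>.\<close>

lemma nehari_perturbation:
  assumes u: "u \<in> Nehari" and v: "v \<in> E" and \<delta>: "0 < \<delta>" "\<delta> < 1"
  shows "\<forall>\<^sub>F s in at_right 0. \<exists>t. \<bar>t - 1\<bar> \<le> \<delta> \<and> (\<lambda>n. t * (u n + s * v n)) \<in> Nehari"
proof -
  have uE: "u \<in> E" by (rule nehari_subset_spaceE[OF u])
  have nz: "u \<noteq> (\<lambda>n. 0)" and eq: "log_sum u = nrm u" using nehari_iff[OF uE] u by auto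
  define w where "w s = (\<lambda>n. u n + s * v n)" for s
  define G where "G s t = t powr p * nrm (w s) - t powr q * (log_sum (w s) + r * ln t * power_sum (w s))"
    for s t
  have wE: "w s \<in> E" for s unfolding w_def by (rule spaceE_add_scale[OF uE v])
  have w0: "w 0 = u" by (simp add: w_def)
  have lim: "((\<lambda>s. G s t) \<longlongrightarrow> G 0 t) (at 0)" for t
    unfolding G_def w_def using tendsto_functionals_along_line[OF uE v] by (auto intro!: tendsto_intros)
  have G0: "0 < G 0 (1 - \<delta>)" "G 0 (1 + \<delta>) < 0"
    using fiber_gap_pos[OF normp_pos[OF uE nz] power_sum_pos[OF uE nz], of "1 - \<delta>"]
      fiber_gap_neg[OF normp_pos[OF uE nz] power_sum_pos[OF uE nz], of "1 + \<delta>"] \<delta>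
    by (simp_all add: G_def w0 eq)
  have signs: "\<forall>\<^sub>F s in at_right 0. 0 < G s (1 - \<delta>) \<and> G s (1 + \<delta>) < 0"
    by (intro eventually_conj order_tendstoD(1)[OF tendsto_mono[OF at_within_le_at lim] G0(1)]
        order_tendstoD(2)[OF tendsto_mono[OF at_within_le_at lim] G0(2)])
  obtain n0 where "u n0 \<noteq> 0" using nz by auto
  moreover have "((\<lambda>s. u n0 + s * v n0) \<longlongrightarrow> u n0 + 0 * v n0) (at_right 0)" by (intro tendsto_intros)
  ultimately have "\<forall>\<^sub>F s in at_right 0. u n0 + s * v n0 \<noteq> 0"
    using tendsto_imp_eventually_ne by simp
  then have "\<forall>\<^sub>F s in at_right 0. w s \<noteq> (\<lambda>n. 0)"
    by (rule eventually_mono) (auto simp: w_def fun_eq_iff)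
  with signs show ?thesis
  proof eventually_elim
    case (elim s)
    have "continuous_on {1 - \<delta>..1 + \<delta>} (G s)" unfolding G_def using \<delta> by (intro continuous_intros) auto
    then obtain t where t: "1 - \<delta> \<le> t" "t \<le> 1 + \<delta>" "G s t = 0"
      using IVT2'[of "G s" "1 + \<delta>" 0 "1 - \<delta>"] elim \<delta> by auto
    then have "(\<lambda>n. t * w s n) \<in> Nehari"
      using scale_mem_nehari[OF wE elim(2), of t] \<delta> by (simp add: G_def)
    then show ?case using t by (intro exI[of _ t]) (auto simp: w_def abs_le_iff)
  qed
qed

text \<open>Otherwise, for small \<open>s > 0\<close> and a \<open>t \<approx> 1\<close> putting \<open>t * (u + s * v)\<close> on the manifold,
  its energy would lie below \<open>I (t * u) \<le> I u\<close>.\<close>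

lemma nehari_minimizer_dI_nonneg:
  assumes u: "u \<in> Nehari" and min: "\<And>w. w \<in> Nehari \<Longrightarrow> I u \<le> I w" and v: "v \<in> E"
  shows "0 \<le> I' u v"
proof (rule ccontr)
  assume "\<not> 0 \<le> I' u v"
  define D where "D s t = (I (\<lambda>n. t * (u n + s * v n)) - I (\<lambda>n. t * u n)) / s" for s t
  have "((\<lambda>x. D (fst x) (snd x)) \<longlongrightarrow> I' u v) (at_right 0 \<times>\<^sub>F nhds 1)"
    using energy_ray_difference_quotient[OF nehari_subset_spaceE[OF u] v]
    unfolding D_def by (rule tendsto_mono[rotated]) (intro prod_filter_mono at_within_le_at order_refl)
  then have "\<forall>\<^sub>F x in at_right 0 \<times>\<^sub>F nhds 1. D (fst x) (snd x) < 0"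
    using \<open>\<not> 0 \<le> I' u v\<close> by (auto intro: order_tendstoD)
  then obtain Pf Pg where Pf: "eventually Pf (at_right 0)" and Pg: "eventually Pg (nhds 1)"
    and neg: "\<And>s t. Pf s \<Longrightarrow> Pg t \<Longrightarrow> D s t < 0"
    unfolding eventually_prod_filter by auto
  obtain d where d: "0 < d" "\<And>t. dist t 1 < d \<Longrightarrow> Pg t" using Pg unfolding eventually_nhds_metric by auto
  define \<delta> where "\<delta> = min (d / 2) (1 / 2)"
  have \<delta>: "0 < \<delta>" "\<delta> < 1" "\<delta> < d" using d by (auto simp: \<delta>_def)
  have "\<forall>\<^sub>F s in at_right 0. Pf s \<and> 0 < s \<and> (\<exists>t. \<bar>t - 1\<bar> \<le> \<delta> \<and> (\<lambda>n. t * (u n + s * v n)) \<in> Nehari)"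
    using Pf eventually_at_right_less nehari_perturbation[OF u v \<delta>(1,2)] by eventually_elim auto
  then obtain s t where s: "Pf s" "0 < s" and t: "\<bar>t - 1\<bar> \<le> \<delta>" "(\<lambda>n. t * (u n + s * v n)) \<in> Nehari"
    using eventually_happens'[OF trivial_limit_at_right_real] by blast
  have "D s t < 0" using neg[OF s(1) d(2)] t(1) \<delta> by (simp add: dist_real_def)
  then have "I (\<lambda>n. t * (u n + s * v n)) < I (\<lambda>n. t * u n)" using s(2) by (simp add: D_def divide_less_0_iff)
  also have "\<dots> \<le> I u" using energy_scale_le[OF u] t(1) \<delta> by simp
  also have "\<dots> \<le> I (\<lambda>n. t * (u n + s * v n))" by (rule min[OF t(2)])
  finally show False by simp
qed

lemma dI_uminus: "I' u (\<lambda>n. - v n) = - I' u v"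
proof -
  have "fdiff (\<lambda>n. - v n) n = - fdiff v n" for n by (simp add: fdiff_def)
  then have e1: "(\<lambda>n. a n * phi p (fdiff u n) * fdiff (\<lambda>n. - v n) n + b n * phi p (u n) * - v n)
      = (\<lambda>n. - (a n * phi p (fdiff u n) * fdiff v n + b n * phi p (u n) * v n))"
    by simp
  have e2: "(\<lambda>n. if u n = 0 then 0 else c n * phi q (u n) * - v n * ln (\<bar>u n\<bar> powr r))
      = (\<lambda>n. - (if u n = 0 then 0 else c n * phi q (u n) * v n * ln (\<bar>u n\<bar> powr r)))"
    by auto
  show ?thesis unfolding dI_def e1 e2 infsum_uminus by simp
qed

lemma nehari_minimizer_critical:
  assumes u: "u \<in> Nehari" and min: "\<And>w. w \<in> Nehari \<Longrightarrow> I u \<le> I w" and v: "v \<in> E"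
  shows "I' u v = 0"
proof -
  have "(\<lambda>n. - v n) \<in> E" using spaceE_scale[OF v, of "-1"] by simp
  then show ?thesis
    using nehari_minimizer_dI_nonneg[OF u min v] nehari_minimizer_dI_nonneg[OF u min] dI_uminus[of u v]
    by fastforce
qed

section \<open>Sign-changing elements\<close>

lemma fdiff_pos_part: "fdiff (pos_part u) n = max (u (n + 1)) 0 - max (u n) 0"
  by (simp add: fdiff_def pos_part_def)

lemma fdiff_neg_part: "fdiff (neg_part u) n = min (u (n + 1)) 0 - min (u n) 0"
  by (simp add: fdiff_def neg_part_def)

lemma m_nonzero: "m \<noteq> 0" using m_ge by simp

lemma power_pred_mult: "x ^ (m - 1) * x = (x :: real) ^ m"
  using m_ge by (simp add: power_eq_if)

lemma norm_term_pos_neg_le: "nt (pos_part u) n + nt (neg_part u) n \<le> nt u n"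
proof -
  have "(fdiff (pos_part u) n) ^ m + (fdiff (neg_part u) n) ^ m \<le> (fdiff u n) ^ m"
    unfolding fdiff_pos_part fdiff_neg_part unfolding fdiff_def by (rule pos_neg_parts_diff_power_le[OF m_even m_nonzero])
  then have "a n * (fdiff (pos_part u) n) ^ m + a n * (fdiff (neg_part u) n) ^ m \<le> a n * (fdiff u n) ^ m"
    using a_pos[of n] by (simp flip: distrib_left)
  moreover have "(pos_part u n) ^ m + (neg_part u n) ^ m = (u n) ^ m"
    using m_ge by (cases "0 \<le> u n") (auto simp: pos_part_def neg_part_def power_0_left)
  then have "b n * (pos_part u n) ^ m + b n * (neg_part u n) ^ m = b n * (u n) ^ m"
    by (simp flip: distrib_left)
  ultimately show ?thesis unfolding norm_term_eq by linarith
qed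

lemma spaceE_pos_part: "u \<in> E \<Longrightarrow> pos_part u \<in> E"
  unfolding spaceE_def mem_Collect_eq
  by (erule summable_on_real_comparison)
     (use norm_term_pos_neg_le norm_term_nonneg in \<open>smt (verit)\<close>)

lemma spaceE_neg_part: "u \<in> E \<Longrightarrow> neg_part u \<in> E"
  unfolding spaceE_def mem_Collect_eq
  by (erule summable_on_real_comparison)
     (use norm_term_pos_neg_le norm_term_nonneg in \<open>smt (verit)\<close>)

lemma norm_term_le_plap_pos_part: "nt (pos_part u) n \<le> plap_term u (pos_part u) n"
proof -
  have "(fdiff (pos_part u) n) ^ m \<le> (fdiff u n) ^ (m - 1) * fdiff (pos_part u) n"
    unfolding fdiff_pos_part unfolding fdiff_def by (rule pos_part_diff_power_le[OF m_even m_nonzero])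
  then have "a n * (fdiff (pos_part u) n) ^ m \<le> a n * ((fdiff u n) ^ (m - 1) * fdiff (pos_part u) n)"
    using a_pos[of n] by simp
  moreover have "(u n) ^ (m - 1) * max (u n) 0 = (max (u n) 0) ^ m"
    using m_ge power_pred_mult[of "u n"] by (cases "0 \<le> u n") (auto simp: power_0_left)
  ultimately show ?thesis unfolding norm_term_eq plap_term_def phi_p by (simp add: pos_part_def algebra_simps)
qed

lemma norm_term_le_plap_neg_part: "nt (neg_part u) n \<le> plap_term u (neg_part u) n"
proof -
  have "(fdiff (neg_part u) n) ^ m \<le> (fdiff u n) ^ (m - 1) * fdiff (neg_part u) n"
    unfolding fdiff_neg_part unfolding fdiff_def by (rule neg_part_diff_power_le[OF m_even m_nonzero])
  then have "a n * (fdiff (neg_part u) n) ^ m \<le> a n * ((fdiff u n) ^ (m - 1) * fdiff (neg_part u) n)"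
    using a_pos[of n] by simp
  moreover have "(u n) ^ (m - 1) * min (u n) 0 = (min (u n) 0) ^ m"
    using m_ge power_pred_mult[of "u n"] by (cases "0 \<le> u n") (auto simp: power_0_left)
  ultimately show ?thesis unfolding norm_term_eq plap_term_def phi_p by (simp add: neg_part_def algebra_simps)
qed

lemma plap_term_pos_neg: "plap_term u (pos_part u) n + plap_term u (neg_part u) n = nt u n"
proof -
  have f: "fdiff (pos_part u) n + fdiff (neg_part u) n = fdiff u n"
    and g: "pos_part u n + neg_part u n = u n"
    by (auto simp: fdiff_def pos_part_def neg_part_def)
  have "plap_term u (pos_part u) n + plap_term u (neg_part u) n
      = a n * phi p (fdiff u n) * (fdiff (pos_part u) n + fdiff (neg_part u) n)
        + b n * phi p (u n) * (pos_part u n + neg_part u n)"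
    unfolding plap_term_def by (simp add: algebra_simps)
  also have "\<dots> = nt u n" unfolding f g by (simp add: norm_term_def mult.assoc phi_mult_self)
  finally show ?thesis .
qed

lemma dI_part:
  assumes "w = pos_part u \<or> w = neg_part u"
  shows "I' u w = (\<Sum>\<^sub>\<infinity>n. plap_term u w n) - log_sum w"
proof -
  have "(if u n = 0 then 0 else c n * phi q (u n) * w n * ln (\<bar>u n\<bar> powr r)) = log_term q r c w n" for n
    using assms phi_mult_self[of q "u n"]
    by (cases "u n" "0::real" rule: linorder_cases)
       (auto simp: pos_part_def neg_part_def log_term_def mult.assoc)
  then show ?thesis by (simp add: dI_def plap_term_def[abs_def] log_sum_def)
qed

lemma log_sum_pos_neg: "u \<in> E \<Longrightarrow> log_sum u = log_sum (pos_part u) + log_sum (neg_part u)"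
proof -
  assume u: "u \<in> E"
  have "log_term q r c u n = log_term q r c (pos_part u) n + log_term q r c (neg_part u) n" for n
    by (auto simp: log_term_def pos_part_def neg_part_def)
  then show ?thesis
    using infsum_add[OF log_summable[OF spaceE_pos_part[OF u]] log_summable[OF spaceE_neg_part[OF u]]]
    by (simp add: log_sum_def)
qed

lemma power_sum_pos_neg: "u \<in> E \<Longrightarrow> power_sum u = power_sum (pos_part u) + power_sum (neg_part u)"
proof -
  assume u: "u \<in> E"
  have "c n * powq (u n) = c n * powq (pos_part u n) + c n * powq (neg_part u n)" for n
    using q_gt_1 by (auto simp: powq_def pos_part_def neg_part_def max_def min_def)
  then show ?thesis
    using infsum_add[OF power_summable[OF spaceE_pos_part[OF u]] power_summable[OF spaceE_neg_part[OF u]]]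
    by (simp add: power_sum_def)
qed

lemma normp_pos_neg_le: "u \<in> E \<Longrightarrow> nrm (pos_part u) + nrm (neg_part u) \<le> nrm u"
proof -
  assume u: "u \<in> E"
  have "nrm (pos_part u) + nrm (neg_part u) = (\<Sum>\<^sub>\<infinity>n. nt (pos_part u) n + nt (neg_part u) n)"
    using infsum_add spaceE_pos_part[OF u] spaceE_neg_part[OF u] by (fastforce simp: normp_def spaceE_def)
  also have "\<dots> \<le> nrm u" unfolding normp_def
    using u spaceE_pos_part[OF u] spaceE_neg_part[OF u]
    by (intro infsum_mono summable_on_add norm_term_pos_neg_le) (auto simp: spaceE_def)
  finally show ?thesis .
qed

lemma nehari_level_le_reduced_energy:
  assumes "w \<in> E" "w \<noteq> (\<lambda>n. 0)" "nrm w \<le> log_sum w"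
  shows "nehari_level \<le> reduced_energy w"
proof -
  obtain t where "(\<lambda>n. t * w n) \<in> Nehari" "I (\<lambda>n. t * w n) \<le> reduced_energy w"
    by (rule nehari_rescale[OF assms])
  then show ?thesis using nehari_level_le by force
qed

text \<open>For a sign-changing \<open>u\<close> with \<open>I' u w = 0\<close> on both sign parts \<open>w\<close>, each part satisfies
  \<open>nrm w \<le> \<Sum> plap_term u w = log_sum w\<close>, so it costs at least the Nehari level; the norm is
  superadditive and \<open>power_sum\<close> additive over the two parts.\<close>

lemma nehari_level_le_sign_part:
  assumes u: "u \<in> E" and w: "w = pos_part u \<or> w = neg_part u"
    and nz: "w \<noteq> (\<lambda>n. 0)" and crit: "I' u w = 0"
  shows "nehari_level \<le> reduced_energy w"
proof -
  have wE: "w \<in> E" using w spaceE_pos_part[OF u] spaceE_neg_part[OF u] by auto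
  have le: "nt w n \<le> plap_term u w n" for n
    using w norm_term_le_plap_pos_part norm_term_le_plap_neg_part by auto
  have "nrm w \<le> (\<Sum>\<^sub>\<infinity>n. plap_term u w n)"
    unfolding normp_def
    by (rule infsum_mono[OF _ normp_directional_derivative(1)[OF u wE] le]) (use wE in \<open>simp add: spaceE_def\<close>)
  also have "\<dots> = log_sum w" using dI_part[OF w] crit by simp
  finally show ?thesis by (rule nehari_level_le_reduced_energy[OF wE nz])
qed

lemma sign_changing_energy_ge:
  assumes "u \<in> signchanging_nehari p q r a b c"
  shows "2 * nehari_level \<le> I u"
proof -
  have u: "u \<in> E" using assms by (simp add: signchanging_nehari_def spaceD_def)
  have crit: "I' u (pos_part u) = 0" "I' u (neg_part u) = 0"
    and nz: "pos_part u \<noteq> (\<lambda>n. 0)" "neg_part u \<noteq> (\<lambda>n. 0)"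
    using assms by (auto simp: signchanging_nehari_def)
  have "nrm u = (\<Sum>\<^sub>\<infinity>n. plap_term u (pos_part u) n + plap_term u (neg_part u) n)"
    unfolding normp_def plap_term_pos_neg ..
  also have "\<dots> = log_sum u"
    using infsum_add[OF normp_directional_derivative(1)[OF u spaceE_pos_part[OF u]]
        normp_directional_derivative(1)[OF u spaceE_neg_part[OF u]]]
      dI_part[of "pos_part u" u] dI_part[of "neg_part u" u] crit log_sum_pos_neg[OF u]
    by simp
  finally have "I u = reduced_energy u" by (simp add: energy_eq reduced_energy_def algebra_simps)
  also have "\<dots> \<ge> reduced_energy (pos_part u) + reduced_energy (neg_part u)"
  proof -
    have "(1/p - 1/q) * (nrm (pos_part u) + nrm (neg_part u)) \<le> (1/p - 1/q) * nrm u"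
      using normp_pos_neg_le[OF u] reduced_coeff_pos by (intro mult_left_mono) auto
    then show ?thesis unfolding reduced_energy_def power_sum_pos_neg[OF u] by (simp add: algebra_simps)
  qed
  finally show ?thesis
    using nehari_level_le_sign_part[OF u _ nz(1) crit(1)] nehari_level_le_sign_part[OF u _ nz(2) crit(2)]
    by simp
qed

end

theorem theorem1p2:
  fixes p q r :: real and a b c :: "int \<Rightarrow> real"
  assumes "1 < p" and "p < q" and "\<exists>k::nat. k \<ge> 1 \<and> p / 2 = real k" and "r \<ge> 1"
    and "\<And>n. a n > 0" and "\<And>n. b n > 0" and "\<And>n. c n > 0"
    and C1: "\<exists>b0>0. \<forall>n. b n \<ge> b0" "\<forall>M. \<exists>N. \<forall>n. \<bar>n\<bar> \<ge> N \<longrightarrow> b n \<ge> M"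
    and C2: "\<exists>c0>0. \<forall>n. c n \<le> c0" "c summable_on UNIV"
  shows "\<exists>ubar \<in> nehari p q r a b c.
           (\<forall>v \<in> spaceD p q r a b c. dI p q r a b c ubar v = 0)
         \<and> (\<forall>u \<in> nehari p q r a b c. energyI p q r a b c ubar \<le> energyI p q r a b c u)
         \<and> energyI p q r a b c ubar = (INF u \<in> nehari p q r a b c. energyI p q r a b c u)
         \<and> energyI p q r a b c ubar > 0
         \<and> (\<forall>u \<in> signchanging_nehari p q r a b c. energyI p q r a b c u \<ge> 2 * energyI p q r a b c ubar)"
proof -
  obtain k :: nat where k: "1 \<le> k" "p / 2 = real k" using assms(3) by blast
  obtain b0 where b0: "0 < b0" "\<And>n. b0 \<le> b n" using C1(1) by blast
  interpret L: log_p_laplacian p q r a b c "2 * k" b0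
    using assms(2,4,5,7) k b0 C2(2) by unfold_locales auto
  obtain ubar where ubar: "ubar \<in> L.Nehari" "L.I ubar = L.nehari_level"
    by (rule L.exists_nehari_minimizer)
  have min: "L.I ubar \<le> L.I u" if "u \<in> L.Nehari" for u
    using L.nehari_level_le[OF that] ubar(2) by simp
  have pos: "0 < L.I ubar"
    using L.energy_nehari_ge[OF ubar(1)] L.reduced_coeff_pos b0(1) by (smt (verit) mult_pos_pos)
  show ?thesis
  proof (intro bexI[OF _ ubar(1)] conjI ballI pos)
    show "L.I' ubar v = 0" if "v \<in> spaceD p q r a b c" for v
      using L.nehari_minimizer_critical[OF ubar(1) min] that by (simp add: spaceD_def)
  qed (use min ubar(2) L.sign_changing_energy_ge in \<open>auto simp: L.nehari_level_def\<close>)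
qed

end
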